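(* Let $\rho_0,\rho_1\in\mathrm{SEP}$ be separable states on a finite-dimensional bipartite system $AB$. Then $R_{\mathrm m}(\rho_0,\rho_1)=P_{\mathrm{LOCC}}(\rho_0,\rho_1)$; i.e. a reusable quantum memory cannot increase the optimal success rate above the LOCC optimum.
   Context: All systems are finite-dimensional. A bipartite state is separable if it is a convex combination of product pure states $\psi^A\otimes\phi^B$; $\mathrm{SEP}$ is the set of separable states. LOCC denotes local operations and classical communication between Alice (systems $A,A'$) and Bob (systems $B,B'$). An LOCC measurement channel is $\mathcal M(X)=\sum_i\mathrm{Tr}[M_iX]|ii\rangle\langle ii|$ with $\{M_i\}$ an LOCC-implementable POVM; $\|X\|_{\mathrm{LOCC}}=\sup_{\mathcal M}\|\mathcal M(X)\|_1$ over LOCC measurement channels; $P_{\mathrm{LOCC}}(\rho_0,\rho_1)=\tfrac12+\tfrac14\|\rho_0-\rho_1\|_{\mathrm{LOCC}}$. Repeated discrimination framework: $Z_j$ i.i.d. uniform on $\{0,1\}$; in round $j$ the state $\rho_{Z_j}$ is given, the guess is $Y_j$, $X_j=1$ iff $Y_j=Z_j$, $S_n=\sum_{j\le n}X_j$. A rate $r$ is achievable if for all $\varepsilon>0$, $m>0$ there is $n\ge m$ with $\Pr(S_n\ge rn)\ge1-\varepsilon$. Memory-assisted protocols: a finite-dimensional shared memory $A'B'$ with initial state $\mu_1^{A'B'}$; in round $j$ an LOCC protocol (allowed to depend on all classical outcomes of earlier rounds, but not on the $Z$'s) is applied to $\rho^{AB}_{Z_j}\otimes\mu_j^{A'B'}$,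 producing $Y_j$ and an outcome-dependent memory state $\mu_{j+1}^{A'B'}$ passed to the next round. $R_{\mathrm m}(\rho_0,\rho_1)$ is the supremum of achievable rates over all memory dimensions, initial memory states and such protocols. *)

theory Defs
  imports Complex_Main
begin

text \<open>Finite-dimensional operators are represented by their matrix entries.
  A single-party operator from a space of dimension n to one of dimension m is a
  function cmat whose entries (i,j) with i < m, j < n are the relevant ones.
  A bipartite operator on C^a (x) C^b is a function bop indexed by pairs (i,j),
  i < a (Alice), j < b (Bob).\<close>

type_synonym cmat = "nat \<Rightarrow> nat \<Rightarrow> complex"
type_synonym bop = "nat \<times> nat \<Rightarrow> nat \<times> nat \<Rightarrow> complex"

definition idm :: cmat where
  "idm i j = (if i = j then 1 else 0)"

definition mmul :: "nat \<Rightarrow> cmat \<Rightarrow> cmat \<Rightarrow> cmat" where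
  "mmul n X Y = (\<lambda>i j. \<Sum>l<n. X i l * Y l j)"

definition kraus_complete :: "nat \<Rightarrow> nat \<Rightarrow> cmat list \<Rightarrow> bool" where
  "kraus_complete d d1 Ks \<longleftrightarrow>
     (\<forall>i<d. \<forall>j<d. (\<Sum>K\<leftarrow>Ks. \<Sum>l<d1. cnj (K l i) * K l j) = (if i = j then 1 else 0))"

text \<open>Finite-round LOCC protocols, fine-grained: the protocol is the list of its leaves,
  each leaf being a product Kraus operator KA (x) KB from C^a (x) C^b to C^a' (x) C^b'
  (the product of all local Kraus operators along the branch).  In each round one party
  applies a local instrument (which may change its local dimension, thereby covering
  local ancillas and discarding of subsystems) and, depending on the outcome, the
  protocol continues.\<close>
inductive locc :: "nat \<Rightarrow> nat \<Rightarrow> nat \<Rightarrow> nat \<Rightarrow> (cmat \<times> cmat) list \<Rightarrow> bool" where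
  triv: "locc a b a b [(idm, idm)]"
| alice: "kraus_complete a a1 Ks \<Longrightarrow> length Ps = length Ks \<Longrightarrow>
          (\<forall>k<length Ks. locc a1 b a' b' (Ps ! k)) \<Longrightarrow>
          locc a b a' b'
            (concat (map (\<lambda>k. map (\<lambda>(X, Y). (mmul a1 X (Ks ! k), Y)) (Ps ! k)) [0..<length Ks]))"
| bob: "kraus_complete b b1 Ks \<Longrightarrow> length Ps = length Ks \<Longrightarrow>
          (\<forall>k<length Ks. locc a b1 a' b' (Ps ! k)) \<Longrightarrow>
          locc a b a' b'
            (concat (map (\<lambda>k. map (\<lambda>(X, Y). (X, mmul b1 Y (Ks ! k))) (Ps ! k)) [0..<length Ks]))"

definition kraus_apply :: "nat \<Rightarrow> nat \<Rightarrow> cmat \<Rightarrow> cmat \<Rightarrow> bop \<Rightarrow> bop" where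
  "kraus_apply a b KA KB X = (\<lambda>(i, j) (i', j').
     \<Sum>x<a. \<Sum>y<b. \<Sum>x'<a. \<Sum>y'<b.
       KA i x * KB j y * X (x, y) (x', y') * cnj (KA i' x') * cnj (KB j' y'))"

definition btrace :: "nat \<Rightarrow> nat \<Rightarrow> bop \<Rightarrow> complex" where
  "btrace a b X = (\<Sum>i<a. \<Sum>j<b. X (i, j) (i, j))"

definition trprod :: "nat \<Rightarrow> nat \<Rightarrow> bop \<Rightarrow> bop \<Rightarrow> complex" where
  "trprod a b M X = (\<Sum>x<a. \<Sum>y<b. \<Sum>x'<a. \<Sum>y'<b. M (x, y) (x', y') * X (x', y') (x, y))"

text \<open>POVM element of outcome o of the LOCC measurement given by the leaves L (each leaf
  labelled by lab): M_o = sum over leaves l with label o of (KA^dagger KA) (x) (KB^dagger KB).\<close>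
definition povm_elem :: "nat \<Rightarrow> nat \<Rightarrow> (cmat \<times> cmat) list \<Rightarrow> (nat \<Rightarrow> nat) \<Rightarrow> nat \<Rightarrow> bop" where
  "povm_elem a' b' L lab c = (\<lambda>(x, y) (x', y').
     \<Sum>l\<in>{l. l < length L \<and> lab l = c}.
       (\<Sum>i<a'. cnj (fst (L ! l) i x) * fst (L ! l) i x') *
       (\<Sum>j<b'. cnj (snd (L ! l) j y) * snd (L ! l) j y'))"

text \<open>||X||_LOCC: supremum over LOCC measurement channels M of ||M(X)||_1; since M(X) is
  diagonal with entries Tr[M_o X], ||M(X)||_1 = sum_o |Tr[M_o X]|.\<close>
definition locc_norm :: "nat \<Rightarrow> nat \<Rightarrow> bop \<Rightarrow> real" where
  "locc_norm dA dB X = Sup {(\<Sum>c\<in>lab ` {..<length L}. cmod (trprod dA dB (povm_elem a' b' L lab c) X))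
                           | a' b' L lab. locc dA dB a' b' L}"

definition P_LOCC :: "nat \<Rightarrow> nat \<Rightarrow> bop \<Rightarrow> bop \<Rightarrow> real" where
  "P_LOCC dA dB \<rho>0 \<rho>1 = 1/2 + 1/4 * locc_norm dA dB (\<lambda>p q. \<rho>0 p q - \<rho>1 p q)"

definition density :: "nat \<Rightarrow> nat \<Rightarrow> bop \<Rightarrow> bool" where
  "density a b X \<longleftrightarrow>
     (\<forall>p\<in>{..<a} \<times> {..<b}. \<forall>q\<in>{..<a} \<times> {..<b}. X q p = cnj (X p q)) \<and>
     (\<forall>v :: nat \<times> nat \<Rightarrow> complex.
        0 \<le> Re (\<Sum>p\<in>{..<a} \<times> {..<b}. \<Sum>q\<in>{..<a} \<times> {..<b}. cnj (v p) * X p q * v q)) \<and>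
     btrace a b X = 1"

definition sep :: "nat \<Rightarrow> nat \<Rightarrow> bop \<Rightarrow> bool" where
  "sep dA dB \<rho> \<longleftrightarrow>
     (\<exists>ps :: (real \<times> (nat \<Rightarrow> complex) \<times> (nat \<Rightarrow> complex)) list.
        (\<forall>(p, u, v)\<in>set ps. 0 \<le> p \<and> (\<Sum>i<dA. (cmod (u i))\<^sup>2) = 1 \<and> (\<Sum>j<dB. (cmod (v j))\<^sup>2) = 1) \<and>
        (\<Sum>(p, u, v)\<leftarrow>ps. p) = 1 \<and>
        (\<forall>i<dA. \<forall>j<dB. \<forall>i'<dA. \<forall>j'<dB.
           \<rho> (i, j) (i', j') =
             (\<Sum>(p, u, v)\<leftarrow>ps. complex_of_real p * (u i * cnj (u i')) * (v j * cnj (v j')))))"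

text \<open>Memory-assisted setting.  Alice holds A (dim dA) and memory A' (dim mA); her joint
  index is i * mA + i' (i < dA, i' < mA); similarly for Bob.  The state rho (x) mu on
  (A A') (x) (B B'):\<close>
definition joint_in :: "nat \<Rightarrow> nat \<Rightarrow> bop \<Rightarrow> bop \<Rightarrow> bop" where
  "joint_in mA mB \<rho> \<mu> = (\<lambda>(x, y) (x', y').
     \<rho> (x div mA, y div mB) (x' div mA, y' div mB) * \<mu> (x mod mA, y mod mB) (x' mod mA, y' mod mB))"

text \<open>A strategy maps the classical history (the leaves obtained in earlier rounds) to
  the LOCC protocol of the current round (leaves from (A A')(B B') to A' B') together
  with the guess attached to each leaf (True = guess 1).\<close>
type_synonym strategy = "nat list \<Rightarrow> (cmat \<times> cmat) list \<times> (nat \<Rightarrow> bool)"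

definition valid_strategy :: "nat \<Rightarrow> nat \<Rightarrow> nat \<Rightarrow> nat \<Rightarrow> strategy \<Rightarrow> bool" where
  "valid_strategy dA dB mA mB S \<longleftrightarrow> (\<forall>h. locc (dA * mA) (dB * mB) mA mB (fst (S h)))"

definition mem_update :: "nat \<Rightarrow> nat \<Rightarrow> nat \<Rightarrow> nat \<Rightarrow> cmat \<times> cmat \<Rightarrow> bop \<Rightarrow> bop \<Rightarrow> bop" where
  "mem_update dA dB mA mB K \<rho> \<mu> = kraus_apply (dA * mA) (dB * mB) (fst K) (snd K) (joint_in mA mB \<rho> \<mu>)"

text \<open>succ_prob ... h mu n t: probability (weighted by the unnormalised memory state mu
  reached after history h) that in the next n rounds, with Z_j i.i.d. uniform, the number
  of correct guesses is at least t.\<close>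
fun succ_prob :: "nat \<Rightarrow> nat \<Rightarrow> nat \<Rightarrow> nat \<Rightarrow> bop \<Rightarrow> bop \<Rightarrow> strategy \<Rightarrow> nat list \<Rightarrow> bop \<Rightarrow> nat \<Rightarrow> real \<Rightarrow> real" where
  "succ_prob dA dB mA mB \<rho>0 \<rho>1 S h \<mu> 0 t = (if t \<le> 0 then Re (btrace mA mB \<mu>) else 0)"
| "succ_prob dA dB mA mB \<rho>0 \<rho>1 S h \<mu> (Suc n) t =
     (\<Sum>z\<in>(UNIV :: bool set). (1/2) *
        (\<Sum>l<length (fst (S h)).
           succ_prob dA dB mA mB \<rho>0 \<rho>1 S (h @ [l])
             (mem_update dA dB mA mB (fst (S h) ! l) (if z then \<rho>1 else \<rho>0) \<mu>) n
             (t - (if snd (S h) l = z then 1 else 0))))"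

definition achievable :: "nat \<Rightarrow> nat \<Rightarrow> nat \<Rightarrow> nat \<Rightarrow> bop \<Rightarrow> bop \<Rightarrow> bop \<Rightarrow> strategy \<Rightarrow> real \<Rightarrow> bool" where
  "achievable dA dB mA mB \<rho>0 \<rho>1 \<mu>1 S r \<longleftrightarrow>
     (\<forall>\<epsilon>>0. \<forall>m::nat>0. \<exists>n\<ge>m. succ_prob dA dB mA mB \<rho>0 \<rho>1 S [] \<mu>1 n (r * real n) \<ge> 1 - \<epsilon>)"

definition R_mem :: "nat \<Rightarrow> nat \<Rightarrow> bop \<Rightarrow> bop \<Rightarrow> real" where
  "R_mem dA dB \<rho>0 \<rho>1 = Sup {r. \<exists>mA mB \<mu>1 S. 0 < mA \<and> 0 < mB \<and> density mA mB \<mu>1 \<and>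
       valid_strategy dA dB mA mB S \<and> achievable dA dB mA mB \<rho>0 \<rho>1 \<mu>1 S r}"

end

theory Submission
  imports Defs
begin

text \<open>Upper bound: a Hermitian memory state is a real combination of product rank-one operators
  (polarization) and the success probability is linear in the memory state, so one may start from
  a product pure memory state.  As the inputs are separable, every branch of an LOCC round leaves
  the memory in a product pure state, and absorbing the memory vectors into the protocol by local
  isometries shows that, whatever happened before, a round is guessed correctly with probability
  at most \<open>P_LOCC\<close>.  Tilting by \<open>\<lambda>\<close> to the number of correct guesses gives the Chernoff bound
  \<open>Pr(S\<^sub>n \<ge> r n) \<le> C ((1 + (\<lambda> - 1) P_LOCC) \<lambda>\<^sup>-\<^sup>r)\<^sup>n\<close>, which decays for a suitable \<open>\<lambda> > 1\<close>
  once \<open>r > P_LOCC\<close>.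

  Lower bound: for \<open>r < P_LOCC\<close> repeat, with trivial memory, an LOCC measurement whose best guess
  succeeds with probability \<open>\<sigma> > r\<close>; the same tilting with \<open>\<lambda> < 1\<close> gives
  \<open>Pr(S\<^sub>n < r n) \<le> ((1 + (\<lambda> - 1) \<sigma>) \<lambda>\<^sup>-\<^sup>r)\<^sup>n \<longrightarrow> 0\<close>.\<close>

section \<open>Vectors, matrices and Kraus operators\<close>

type_synonym cvec = "nat \<Rightarrow> complex"

definition cinner :: "nat \<Rightarrow> cvec \<Rightarrow> cvec \<Rightarrow> complex" where
  "cinner n w w' = (\<Sum>i<n. cnj (w i) * w' i)"

definition sqnorm :: "nat \<Rightarrow> cvec \<Rightarrow> real" where
  "sqnorm n w = (\<Sum>i<n. (cmod (w i))\<^sup>2)"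

definition mvmul :: "nat \<Rightarrow> cmat \<Rightarrow> cvec \<Rightarrow> cvec" where
  "mvmul n K w = (\<lambda>i. \<Sum>x<n. K i x * w x)"

lemma sqnorm_nonneg: "0 \<le> sqnorm n w"
  by (simp add: sqnorm_def sum_nonneg)

lemma of_real_sqnorm: "complex_of_real (sqnorm n w) = cinner n w w"
  unfolding sqnorm_def cinner_def of_real_sum
  by (rule sum.cong[OF refl], simp only: complex_norm_square mult.commute)

lemma sqnorm_scale: "sqnorm n (\<lambda>i. c * w i) = (cmod c)\<^sup>2 * sqnorm n w"
  by (simp add: sqnorm_def norm_mult power_mult_distrib sum_distrib_left)

lemma sqnorm_normalize:
  assumes "0 < sqnorm m a"
  obtains a0 where "sqnorm m a0 = 1" and "a = (\<lambda>i. complex_of_real (sqrt (sqnorm m a)) * a0 i)"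
proof
  let ?c = "sqrt (sqnorm m a)"
  show "sqnorm m (\<lambda>i. complex_of_real (1 / ?c) * a i) = 1"
    using assms unfolding sqnorm_scale by (simp add: power_divide norm_divide)
  show "a = (\<lambda>i. complex_of_real ?c * (complex_of_real (1 / ?c) * a i))"
    using assms by (simp add: mult.assoc[symmetric] of_real_mult[symmetric])
qed

lemma mvmul_scale: "mvmul n K (\<lambda>x. c * w x) = (\<lambda>i. c * mvmul n K w i)"
  by (simp add: mvmul_def sum_distrib_left mult_ac)

lemma mvmul_mmul: "mvmul a (mmul a1 X K) w = mvmul a1 X (mvmul a K w)"
proof (rule ext)
  fix i
  have "mvmul a (mmul a1 X K) w i = (\<Sum>x<a. \<Sum>l<a1. X i l * K l x * w x)"
    by (simp add: mvmul_def mmul_def sum_distrib_right)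
  also have "\<dots> = (\<Sum>l<a1. \<Sum>x<a. X i l * K l x * w x)"
    by (rule sum.swap)
  also have "\<dots> = mvmul a1 X (mvmul a K w) i"
    by (simp add: mvmul_def sum_distrib_left mult.assoc)
  finally show "mvmul a (mmul a1 X K) w i = mvmul a1 X (mvmul a K w) i" .
qed

lemma mvmul_idm: "i < n \<Longrightarrow> mvmul n idm w i = w i"
  by (simp add: mvmul_def idm_def if_distrib[of "\<lambda>t. t * _"] cong: if_cong)

lemma mmul_assoc: "mmul n (mmul m A B) C = mmul m A (mmul n B C)"
proof (intro ext)
  fix i j
  have "mmul n (mmul m A B) C i j = (\<Sum>l<n. \<Sum>p<m. A i p * B p l * C l j)"
    by (simp add: mmul_def sum_distrib_right)
  also have "\<dots> = (\<Sum>p<m. \<Sum>l<n. A i p * B p l * C l j)"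
    by (rule sum.swap)
  also have "\<dots> = mmul m A (mmul n B C) i j"
    by (simp add: mmul_def sum_distrib_left mult.assoc)
  finally show "mmul n (mmul m A B) C i j = mmul m A (mmul n B C) i j" .
qed

lemma mmul_eq_mvmul_column: "mmul n K V l j = mvmul n K (\<lambda>x. V x j) l"
  by (simp add: mmul_def mvmul_def)

lemma cinner_mvmul:
  "cinner a1 (mvmul a K w) (mvmul a K w') =
     (\<Sum>x<a. \<Sum>y<a. (\<Sum>l<a1. cnj (K l x) * K l y) * (cnj (w x) * w' y))"
proof -
  have "cinner a1 (mvmul a K w) (mvmul a K w') =
      (\<Sum>l<a1. \<Sum>x<a. \<Sum>y<a. (cnj (K l x) * K l y) * (cnj (w x) * w' y))"
    unfolding cinner_def mvmul_def cnj_sum sum_product by (simp add: mult_ac)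
  also have "\<dots> = (\<Sum>x<a. \<Sum>y<a. \<Sum>l<a1. (cnj (K l x) * K l y) * (cnj (w x) * w' y))"
    by (subst sum.swap) (simp add: sum.swap[of _ "{..<a1}"])
  finally show ?thesis
    by (simp add: sum_distrib_right)
qed

lemma sum_lessThan_mult:
  fixes f :: "nat \<Rightarrow> 'a::comm_monoid_add"
  shows "(\<Sum>x<d * m. f x) = (\<Sum>i<d. \<Sum>j<m. f (i * m + j))"
proof (induction d)
  case (Suc d)
  have "(\<Sum>x<Suc d * m. f x) = (\<Sum>x<d * m. f x) + (\<Sum>x\<in>{d * m..<d * m + m}. f x)"
    using sum.atLeastLessThan_concat[of 0 "d * m" "d * m + m" f] by (simp add: atLeast0LessThan add.commute)
  also have "(\<Sum>x\<in>{d * m..<d * m + m}. f x) = (\<Sum>j<m. f (d * m + j))"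
    using sum.atLeastLessThan_shift_bounds[of f 0 "d * m" m] by (simp add: atLeast0LessThan o_def add.commute)
  finally show ?case
    using Suc by (simp add: add.commute)
qed simp

text \<open>The index of \<open>u \<otimes> a\<close> is \<open>i * m + i'\<close>, matching the joint indexing of \<^const>\<open>joint_in\<close>.\<close>
definition vtensor :: "nat \<Rightarrow> cvec \<Rightarrow> cvec \<Rightarrow> cvec" where
  "vtensor m u a = (\<lambda>x. u (x div m) * a (x mod m))"

lemma sqnorm_vtensor: "0 < m \<Longrightarrow> sqnorm (d * m) (vtensor m u a) = sqnorm d u * sqnorm m a"
  unfolding sqnorm_def vtensor_def sum_lessThan_mult by (simp add: norm_mult power_mult_distrib sum_product)

text \<open>The map \<open>u \<mapsto> u \<otimes> a\<close> from \<open>\<complex>\<^sup>d\<close> to \<open>\<complex>\<^sup>d \<otimes> \<complex>\<^sup>m\<close>, an isometry when \<open>a\<close> is a unit vector.\<close>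
definition tensor_ket :: "nat \<Rightarrow> cvec \<Rightarrow> cmat" where
  "tensor_ket m a = (\<lambda>x i. if x div m = i then a (x mod m) else 0)"

lemma mvmul_vtensor: "mvmul (d * m) K (vtensor m u a) = mvmul d (mmul (d * m) K (tensor_ket m a)) u"
proof (intro ext)
  fix r
  have "mvmul d (mmul (d * m) K (tensor_ket m a)) u r = (\<Sum>x<d * m. \<Sum>i<d. K r x * tensor_ket m a x i * u i)"
    by (simp add: mvmul_def mmul_def sum_distrib_right sum.swap[of _ "{..<d}"])
  also have "\<dots> = (\<Sum>x<d * m. K r x * (u (x div m) * a (x mod m)))"
    by (intro sum.cong refl)
      (simp add: tensor_ket_def less_mult_imp_div_less if_distrib[of "\<lambda>t. _ * t"] mult_ac cong: if_cong)
  finally show "mvmul (d * m) K (vtensor m u a) r = mvmul d (mmul (d * m) K (tensor_ket m a)) u r"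
    by (simp add: mvmul_def vtensor_def)
qed

lemma sqnorm_mvmul_vtensor_scaled:
  "sqnorm m' (mvmul (d * m) K (vtensor m u (\<lambda>i. complex_of_real s * a i))) =
     s\<^sup>2 * sqnorm m' (mvmul d (mmul (d * m) K (tensor_ket m a)) u)"
proof -
  have "vtensor m u (\<lambda>i. complex_of_real s * a i) = (\<lambda>x. complex_of_real s * vtensor m u a x)"
    by (simp add: vtensor_def mult_ac)
  then show ?thesis
    by (simp add: mvmul_scale sqnorm_scale mvmul_vtensor)
qed

lemma kraus_complete_cinner:
  assumes "kraus_complete a a1 Ks"
  shows "(\<Sum>K\<leftarrow>Ks. cinner a1 (mvmul a K w) (mvmul a K w')) = cinner a w w'"
proof -
  have "(\<Sum>K\<leftarrow>Ks. cinner a1 (mvmul a K w) (mvmul a K w')) =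
      (\<Sum>x<a. \<Sum>y<a. (\<Sum>K\<leftarrow>Ks. \<Sum>l<a1. cnj (K l x) * K l y) * (cnj (w x) * w' y))"
    unfolding cinner_mvmul sum_list_sum_nth atLeast0LessThan
    by (subst sum.swap) (simp add: sum.swap[of _ "{..<length Ks}"] sum_distrib_right)
  also have "\<dots> = (\<Sum>x<a. \<Sum>y<a. if x = y then cnj (w x) * w' y else 0)"
    using assms unfolding kraus_complete_def by (intro sum.cong refl) simp
  also have "\<dots> = cinner a w w'"
    by (simp add: cinner_def)
  finally show ?thesis .
qed

lemma kraus_complete_sqnorm:
  assumes "kraus_complete a a1 Ks"
  shows "(\<Sum>K\<leftarrow>Ks. sqnorm a1 (mvmul a K w)) = sqnorm a w"
proof -
  have "complex_of_real (\<Sum>K\<leftarrow>Ks. sqnorm a1 (mvmul a K w)) = complex_of_real (sqnorm a w)"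
    using kraus_complete_cinner[OF assms]
    by (simp add: sum_list_of_real[symmetric] o_def of_real_sqnorm)
  then show ?thesis
    by (simp only: of_real_eq_iff)
qed

lemma kraus_complete_mmul:
  assumes K: "kraus_complete a a1 Ks" and V: "kraus_complete a0 a [V]"
  shows "kraus_complete a0 a1 (map (\<lambda>K. mmul a K V) Ks)"
  unfolding kraus_complete_def
proof (intro allI impI)
  fix i j assume "i < a0" "j < a0"
  then have "cinner a (\<lambda>x. V x i) (\<lambda>x. V x j) = (if i = j then 1 else 0)"
    using V unfolding kraus_complete_def cinner_def by simp
  then show "(\<Sum>K\<leftarrow>map (\<lambda>K. mmul a K V) Ks. \<Sum>l<a1. cnj (K l i) * K l j) = (if i = j then 1 else 0)"
    using kraus_complete_cinner[OF K]
    by (simp add: o_def mmul_eq_mvmul_column cinner_def[of a1])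
qed

lemma kraus_complete_tensor_ket:
  assumes "sqnorm m a = 1" and "0 < m"
  shows "kraus_complete d (d * m) [tensor_ket m a]"
  unfolding kraus_complete_def
proof (intro allI impI)
  fix i j assume "i < d" "j < d"
  have "(\<Sum>j'<m. cnj (a j') * a j') = 1"
    using assms(1) of_real_sqnorm[of m a] by (simp add: cinner_def)
  then have "(\<Sum>j'<m. cnj (tensor_ket m a (i' * m + j') i) * tensor_ket m a (i' * m + j') j) =
      (if i' = i then if i = j then 1 else 0 else 0)" for i'
    using assms(2) by (cases "i' = i"; cases "i' = j") (simp_all add: tensor_ket_def)
  then show "(\<Sum>K\<leftarrow>[tensor_ket m a]. \<Sum>l<d * m. cnj (K l i) * K l j) = (if i = j then 1 else 0)"
    using \<open>i < d\<close> by (simp add: sum_lessThan_mult)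
qed

definition bra :: "nat \<Rightarrow> cmat" where
  "bra i = (\<lambda>r c. if r = 0 \<and> c = i then 1 else 0)"

lemma kraus_complete_bras: "kraus_complete a 1 (map bra [0..<a])"
  unfolding kraus_complete_def
proof (intro allI impI)
  fix i j assume "i < a" "j < a"
  moreover have "cnj (if i = k then 1 else 0) * (if j = k then 1 else (0::complex)) = (if k = i \<and> i = j then 1 else 0)" for k
    by auto
  ultimately show "(\<Sum>K\<leftarrow>map bra [0..<a]. \<Sum>l<1. cnj (K l i) * K l j) = (if i = j then 1 else 0)"
    by (simp add: sum_list_sum_nth atLeast0LessThan bra_def)
qed

lemma mmul_bra_idm: "i < n \<Longrightarrow> mmul n (bra i) idm = bra i"
  by (intro ext) (auto simp: mmul_def bra_def idm_def if_distrib[of "\<lambda>t. t * _"] cong: if_cong)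

lemma mmul_idm_bra: "mmul (Suc 0) idm (bra k) = bra k"
  by (intro ext) (simp add: mmul_def bra_def idm_def)

section \<open>LOCC protocols\<close>

lemma sum_list_map_concat: "(\<Sum>x\<leftarrow>concat xss. f x) = (\<Sum>xs\<leftarrow>xss. \<Sum>x\<leftarrow>xs. f x)"
  by (induction xss) auto

lemma locc_leaf_sqnorm_sum:
  assumes "locc a b a' b' L"
  shows "(\<Sum>l\<leftarrow>L. sqnorm a' (mvmul a (fst l) u) * sqnorm b' (mvmul b (snd l) v)) = sqnorm a u * sqnorm b v"
  using assms
proof (induction arbitrary: u v rule: locc.induct)
  case (triv a b)
  then show ?case
    by (simp add: sqnorm_def mvmul_idm)
next
  case (alice a a1 Ks Ps b a' b')
  have "(\<Sum>l\<leftarrow>concat (map (\<lambda>k. map (\<lambda>(X, Y). (mmul a1 X (Ks ! k), Y)) (Ps ! k)) [0..<length Ks]).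
          sqnorm a' (mvmul a (fst l) u) * sqnorm b' (mvmul b (snd l) v))
      = (\<Sum>k\<leftarrow>[0..<length Ks]. \<Sum>l\<leftarrow>Ps ! k.
          sqnorm a' (mvmul a1 (fst l) (mvmul a (Ks ! k) u)) * sqnorm b' (mvmul b (snd l) v))"
    by (simp add: sum_list_map_concat o_def case_prod_beta mvmul_mmul)
  also have "\<dots> = (\<Sum>k\<leftarrow>[0..<length Ks]. sqnorm a1 (mvmul a (Ks ! k) u) * sqnorm b v)"
    using alice.IH by (intro arg_cong[where f=sum_list] map_cong refl) auto
  also have "\<dots> = sqnorm a u * sqnorm b v"
    using kraus_complete_sqnorm[OF alice.hyps(1), of u]
    by (simp add: sum_list_sum_nth atLeast0LessThan sum_distrib_right[symmetric])
  finally show ?case .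
next
  case (bob b b1 Ks Ps a a' b')
  have "(\<Sum>l\<leftarrow>concat (map (\<lambda>k. map (\<lambda>(X, Y). (X, mmul b1 Y (Ks ! k))) (Ps ! k)) [0..<length Ks]).
          sqnorm a' (mvmul a (fst l) u) * sqnorm b' (mvmul b (snd l) v))
      = (\<Sum>k\<leftarrow>[0..<length Ks]. \<Sum>l\<leftarrow>Ps ! k.
          sqnorm a' (mvmul a (fst l) u) * sqnorm b' (mvmul b1 (snd l) (mvmul b (Ks ! k) v)))"
    by (simp add: sum_list_map_concat o_def case_prod_beta mvmul_mmul)
  also have "\<dots> = (\<Sum>k\<leftarrow>[0..<length Ks]. sqnorm a u * sqnorm b1 (mvmul b (Ks ! k) v))"
    using bob.IH by (intro arg_cong[where f=sum_list] map_cong refl) auto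
  also have "\<dots> = sqnorm a u * sqnorm b v"
    using kraus_complete_sqnorm[OF bob.hyps(1), of v]
    by (simp add: sum_list_sum_nth atLeast0LessThan sum_distrib_left[symmetric])
  finally show ?case .
qed

lemma locc_precompose_alice:
  assumes "locc a b a' b' L" and "kraus_complete a0 a [V]"
  shows "locc a0 b a' b' (map (\<lambda>(X, Y). (mmul a X V, Y)) L)"
  using assms
proof (induction arbitrary: a0 V rule: locc.induct)
  case (triv a b)
  have "locc a0 b a b (concat (map (\<lambda>k. map (\<lambda>(X, Y). (mmul a X ([V] ! k), Y)) ([[(idm, idm)]] ! k)) [0..<length [V]]))"
    by (rule locc.alice) (use triv in \<open>auto intro: locc.triv\<close>)
  then show ?case by simp
next
  case (alice a a1 Ks Ps b a' b')
  let ?Ks = "map (\<lambda>K. mmul a K V) Ks"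
  have "map (\<lambda>(X, Y). (mmul a X V, Y)) (concat (map (\<lambda>k. map (\<lambda>(X, Y). (mmul a1 X (Ks ! k), Y)) (Ps ! k)) [0..<length Ks]))
      = concat (map (\<lambda>k. map (\<lambda>(X, Y). (mmul a1 X (?Ks ! k), Y)) (Ps ! k)) [0..<length ?Ks])"
    by (auto simp: map_concat mmul_assoc intro!: arg_cong[where f=concat] map_cong)
  also have "locc a0 b a' b' \<dots>"
    by (rule locc.alice) (use alice kraus_complete_mmul in auto)
  finally show ?case .
next
  case (bob b b1 Ks Ps a a' b')
  let ?Ps = "map (map (\<lambda>(X, Y). (mmul a X V, Y))) Ps"
  have "map (\<lambda>(X, Y). (mmul a X V, Y)) (concat (map (\<lambda>k. map (\<lambda>(X, Y). (X, mmul b1 Y (Ks ! k))) (Ps ! k)) [0..<length Ks]))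
      = concat (map (\<lambda>k. map (\<lambda>(X, Y). (X, mmul b1 Y (Ks ! k))) (?Ps ! k)) [0..<length Ks])"
    using bob.hyps(2) by (auto simp: map_concat intro!: arg_cong[where f=concat] map_cong)
  also have "locc a0 b a' b' \<dots>"
    by (rule locc.bob) (use bob in auto)
  finally show ?case .
qed

lemma locc_precompose_bob:
  assumes "locc a b a' b' L" and "kraus_complete b0 b [W]"
  shows "locc a b0 a' b' (map (\<lambda>(X, Y). (X, mmul b Y W)) L)"
  using assms
proof (induction arbitrary: b0 W rule: locc.induct)
  case (triv a b)
  have "locc a b0 a b (concat (map (\<lambda>k. map (\<lambda>(X, Y). (X, mmul b Y ([W] ! k))) ([[(idm, idm)]] ! k)) [0..<length [W]]))"
    by (rule locc.bob) (use triv in \<open>auto intro: locc.triv\<close>)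
  then show ?case by simp
next
  case (bob b b1 Ks Ps a a' b')
  let ?Ks = "map (\<lambda>K. mmul b K W) Ks"
  have "map (\<lambda>(X, Y). (X, mmul b Y W)) (concat (map (\<lambda>k. map (\<lambda>(X, Y). (X, mmul b1 Y (Ks ! k))) (Ps ! k)) [0..<length Ks]))
      = concat (map (\<lambda>k. map (\<lambda>(X, Y). (X, mmul b1 Y (?Ks ! k))) (Ps ! k)) [0..<length ?Ks])"
    by (auto simp: map_concat mmul_assoc intro!: arg_cong[where f=concat] map_cong)
  also have "locc a b0 a' b' \<dots>"
    by (rule locc.bob) (use bob kraus_complete_mmul in auto)
  finally show ?case .
next
  case (alice a a1 Ks Ps b a' b')
  let ?Ps = "map (map (\<lambda>(X, Y). (X, mmul b Y W))) Ps"
  have "map (\<lambda>(X, Y). (X, mmul b Y W)) (concat (map (\<lambda>k. map (\<lambda>(X, Y). (mmul a1 X (Ks ! k), Y)) (Ps ! k)) [0..<length Ks]))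
      = concat (map (\<lambda>k. map (\<lambda>(X, Y). (mmul a1 X (Ks ! k), Y)) (?Ps ! k)) [0..<length Ks])"
    using alice.hyps(2) by (auto simp: map_concat intro!: arg_cong[where f=concat] map_cong)
  also have "locc a b0 a' b' \<dots>"
    by (rule locc.alice) (use alice in auto)
  finally show ?case .
qed

text \<open>Refines a leaf by measuring both outputs in the computational basis, which leaves
  one-dimensional outputs.\<close>
definition measure_leaf :: "nat \<Rightarrow> nat \<Rightarrow> cmat \<times> cmat \<Rightarrow> (cmat \<times> cmat) list" where
  "measure_leaf a' b' XY =
     map (\<lambda>(i, j). (mmul a' (bra i) (fst XY), mmul b' (bra j) (snd XY))) (List.product [0..<a'] [0..<b'])"

lemma locc_measure_all: "locc a b 1 1 (map (\<lambda>(i, j). (bra i, bra j)) (List.product [0..<a] [0..<b]))"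
proof -
  define LB where "LB = concat (map (\<lambda>k. map (\<lambda>(X, Y). (X, mmul 1 Y (map bra [0..<b] ! k)))
                                     (replicate b [(idm, idm)] ! k)) [0..<length (map bra [0..<b])])"
  have "locc 1 b 1 1 LB"
    unfolding LB_def by (rule locc.bob) (use kraus_complete_bras[of b] in \<open>auto intro: locc.triv\<close>)
  moreover have "LB = concat (map (\<lambda>k. [(idm, bra k)]) [0..<b])"
    unfolding LB_def by (intro arg_cong[where f=concat] map_cong) (simp_all add: mmul_idm_bra)
  ultimately have LB: "locc 1 b 1 1 (map (\<lambda>k. (idm, bra k)) [0..<b])"
    by (simp add: concat_map_singleton)
  define LA where "LA = concat (map (\<lambda>k. map (\<lambda>(X, Y). (mmul 1 X (map bra [0..<a] ! k), Y))
                                     (replicate a (map (\<lambda>k. (idm, bra k)) [0..<b]) ! k)) [0..<length (map bra [0..<a])])"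
  have "locc a b 1 1 LA"
    unfolding LA_def by (rule locc.alice) (use LB kraus_complete_bras[of a] in auto)
  moreover have "LA = concat (map (\<lambda>i. map (\<lambda>j. (bra i, bra j)) [0..<b]) [0..<a])"
    unfolding LA_def by (intro arg_cong[where f=concat] map_cong) (simp_all add: mmul_idm_bra)
  ultimately show ?thesis
    by (simp add: product_concat_map map_concat o_def)
qed

lemma concat_map_concat_map:
  "concat (map f (concat (map F xs))) = concat (map (\<lambda>k. concat (map f (F k))) xs)"
  by (induction xs) auto

lemma measure_leaf_mmul_alice:
  "concat (map (measure_leaf a' b') (map (\<lambda>(X, Y). (mmul a1 X K, Y)) P)) =
     map (\<lambda>(X, Y). (mmul a1 X K, Y)) (concat (map (measure_leaf a' b') P))"
  by (induction P) (auto simp: measure_leaf_def mmul_assoc case_prod_beta)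

lemma measure_leaf_mmul_bob:
  "concat (map (measure_leaf a' b') (map (\<lambda>(X, Y). (X, mmul b1 Y K)) P)) =
     map (\<lambda>(X, Y). (X, mmul b1 Y K)) (concat (map (measure_leaf a' b') P))"
  by (induction P) (auto simp: measure_leaf_def mmul_assoc case_prod_beta)

lemma locc_measure_outputs:
  assumes "locc a b a' b' L"
  shows "locc a b 1 1 (concat (map (measure_leaf a' b') L))"
  using assms
proof (induction rule: locc.induct)
  case (triv a b)
  have "concat (map (measure_leaf a b) [(idm, idm)]) = map (\<lambda>(i, j). (bra i, bra j)) (List.product [0..<a] [0..<b])"
    by (auto simp: measure_leaf_def mmul_bra_idm intro!: map_cong)
  then show ?case
    using locc_measure_all by simp
next
  case (alice a a1 Ks Ps b a' b')
  have "concat (map (measure_leaf a' b') (concat (map (\<lambda>k. map (\<lambda>(X, Y). (mmul a1 X (Ks ! k), Y)) (Ps ! k)) [0..<length Ks])))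
     = concat (map (\<lambda>k. map (\<lambda>(X, Y). (mmul a1 X (Ks ! k), Y))
                         (map (\<lambda>P. concat (map (measure_leaf a' b') P)) Ps ! k)) [0..<length Ks])"
    using alice.hyps(2) unfolding concat_map_concat_map measure_leaf_mmul_alice
    by (intro arg_cong[where f=concat] map_cong) simp_all
  also have "locc a b 1 1 \<dots>"
    by (rule locc.alice) (use alice in auto)
  finally show ?case .
next
  case (bob b b1 Ks Ps a a' b')
  have "concat (map (measure_leaf a' b') (concat (map (\<lambda>k. map (\<lambda>(X, Y). (X, mmul b1 Y (Ks ! k))) (Ps ! k)) [0..<length Ks])))
     = concat (map (\<lambda>k. map (\<lambda>(X, Y). (X, mmul b1 Y (Ks ! k)))
                         (map (\<lambda>P. concat (map (measure_leaf a' b') P)) Ps ! k)) [0..<length Ks])"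
    using bob.hyps(2) unfolding concat_map_concat_map measure_leaf_mmul_bob
    by (intro arg_cong[where f=concat] map_cong) simp_all
  also have "locc a b 1 1 \<dots>"
    by (rule locc.bob) (use bob in auto)
  finally show ?case .
qed

lemma nth_concat_equal_length:
  assumes "\<forall>xs\<in>set xss. length xs = K" and "l < length xss" and "p < K"
  shows "concat xss ! (l * K + p) = xss ! l ! p"
  using assms
proof (induction xss arbitrary: l)
  case (Cons xs xss)
  then show ?case
    by (cases l) (auto simp: nth_append algebra_simps)
qed simp

lemma length_concat_equal_length: "\<forall>xs\<in>set xss. length xs = K \<Longrightarrow> length (concat xss) = length xss * K"
  by (induction xss) auto

lemma length_measure_leaf [simp]: "length (measure_leaf a' b' XY) = a' * b'"
  by (simp add: measure_leaf_def)

lemma nth_measure_leaf: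
  assumes "i < a'" and "j < b'"
  shows "measure_leaf a' b' XY ! (i * b' + j) = (mmul a' (bra i) (fst XY), mmul b' (bra j) (snd XY))"
proof -
  let ?rows = "map (\<lambda>i. map (\<lambda>j. (mmul a' (bra i) (fst XY), mmul b' (bra j) (snd XY))) [0..<b']) [0..<a']"
  have "measure_leaf a' b' XY = concat ?rows"
    by (simp add: measure_leaf_def product_concat_map map_concat o_def)
  moreover have "concat ?rows ! (i * b' + j) = ?rows ! i ! j"
    using assms by (intro nth_concat_equal_length) auto
  ultimately show ?thesis
    using assms by simp
qed

section \<open>Separable ensembles and LOCC measurements\<close>

definition prod_ketbra :: "cvec \<Rightarrow> cvec \<Rightarrow> bop" where
  "prod_ketbra u v = (\<lambda>(i, j) (i', j'). u i * cnj (u i') * (v j * cnj (v j')))"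

lemma prod_ketbra_apply [simp]: "prod_ketbra u v (i, j) (i', j') = u i * cnj (u i') * (v j * cnj (v j'))"
  by (simp add: prod_ketbra_def)

lemma cnj_prod_ketbra: "cnj (prod_ketbra u v q p) = prod_ketbra u v p q"
  by (cases p; cases q) (simp add: mult_ac)

lemma btrace_prod_ketbra: "btrace a b (prod_ketbra w w') = complex_of_real (sqnorm a w * sqnorm b w')"
  by (simp add: btrace_def of_real_sqnorm cinner_def sum_product mult_ac)

lemma kraus_apply_prod_ketbra:
  "kraus_apply a b KA KB (prod_ketbra w w') = prod_ketbra (mvmul a KA w) (mvmul b KB w')"
proof (intro ext)
  fix p q :: "nat \<times> nat"
  obtain i j i' j' where pq: "p = (i, j)" "q = (i', j')"
    by (cases p, cases q)
  have "prod_ketbra (mvmul a KA w) (mvmul b KB w') (i, j) (i', j')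
      = (\<Sum>x<a. \<Sum>x'<a. (KA i x * w x) * cnj (KA i' x' * w x')) *
        (\<Sum>y<b. \<Sum>y'<b. (KB j y * w' y) * cnj (KB j' y' * w' y'))"
    unfolding prod_ketbra_apply mvmul_def cnj_sum sum_product by simp
  also have "\<dots> = (\<Sum>x<a. \<Sum>y<b. \<Sum>x'<a. \<Sum>y'<b.
      ((KA i x * w x) * cnj (KA i' x' * w x')) * ((KB j y * w' y) * cnj (KB j' y' * w' y')))"
    by (simp only: sum_product)
  also have "\<dots> = kraus_apply a b KA KB (prod_ketbra w w') (i, j) (i', j')"
    unfolding kraus_apply_def by (simp add: mult_ac)
  finally show "kraus_apply a b KA KB (prod_ketbra w w') p q = prod_ketbra (mvmul a KA w) (mvmul b KB w') p q"
    using pq by simp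
qed

type_synonym ensemble = "(real \<times> cvec \<times> cvec) list"

abbreviation ens_prob :: "ensemble \<Rightarrow> nat \<Rightarrow> real" where "ens_prob ps k \<equiv> fst (ps ! k)"
abbreviation ens_alice :: "ensemble \<Rightarrow> nat \<Rightarrow> cvec" where "ens_alice ps k \<equiv> fst (snd (ps ! k))"
abbreviation ens_bob :: "ensemble \<Rightarrow> nat \<Rightarrow> cvec" where "ens_bob ps k \<equiv> snd (snd (ps ! k))"

definition ensemble_rep :: "nat \<Rightarrow> nat \<Rightarrow> bop \<Rightarrow> ensemble \<Rightarrow> bool" where
  "ensemble_rep dA dB \<rho> ps \<longleftrightarrow> (\<forall>i<dA. \<forall>j<dB. \<forall>i'<dA. \<forall>j'<dB. \<rho> (i, j) (i', j') =
     (\<Sum>k<length ps. complex_of_real (ens_prob ps k) * prod_ketbra (ens_alice ps k) (ens_bob ps k) (i, j) (i', j')))"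

definition prob_ensemble :: "nat \<Rightarrow> nat \<Rightarrow> ensemble \<Rightarrow> bool" where
  "prob_ensemble dA dB ps \<longleftrightarrow>
     (\<forall>k<length ps. 0 \<le> ens_prob ps k \<and> sqnorm dA (ens_alice ps k) = 1 \<and> sqnorm dB (ens_bob ps k) = 1) \<and>
     (\<Sum>k<length ps. ens_prob ps k) = 1"

lemma sep_obtain_ensemble:
  assumes "sep dA dB \<rho>"
  obtains ps where "ensemble_rep dA dB \<rho> ps" and "prob_ensemble dA dB ps"
proof -
  obtain ps :: ensemble where
    ps: "\<forall>(p, u, v)\<in>set ps. 0 \<le> p \<and> (\<Sum>i<dA. (cmod (u i))\<^sup>2) = 1 \<and> (\<Sum>j<dB. (cmod (v j))\<^sup>2) = 1"
      "(\<Sum>(p, u, v)\<leftarrow>ps. p) = 1"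
      "\<forall>i<dA. \<forall>j<dB. \<forall>i'<dA. \<forall>j'<dB. \<rho> (i, j) (i', j') =
         (\<Sum>(p, u, v)\<leftarrow>ps. complex_of_real p * (u i * cnj (u i')) * (v j * cnj (v j')))"
    using assms unfolding sep_def by blast
  have "ensemble_rep dA dB \<rho> ps"
    unfolding ensemble_rep_def using ps(3)
    by (simp add: sum_list_sum_nth atLeast0LessThan case_prod_beta mult.assoc)
  moreover have "prob_ensemble dA dB ps"
    unfolding prob_ensemble_def sqnorm_def using ps(1,2)
    by (auto simp: sum_list_sum_nth atLeast0LessThan case_prod_beta dest!: nth_mem)
  ultimately show ?thesis
    using that by blast
qed

definition leaf_effect :: "nat \<Rightarrow> nat \<Rightarrow> cmat \<times> cmat \<Rightarrow> bop" where
  "leaf_effect a' b' XY = (\<lambda>(x, y) (x', y').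
     (\<Sum>i<a'. cnj (fst XY i x) * fst XY i x') * (\<Sum>j<b'. cnj (snd XY j y) * snd XY j y'))"

definition leaf_weight :: "nat \<Rightarrow> nat \<Rightarrow> nat \<Rightarrow> nat \<Rightarrow> ensemble \<Rightarrow> cmat \<times> cmat \<Rightarrow> real" where
  "leaf_weight a b a' b' ps XY = (\<Sum>k<length ps. ens_prob ps k *
      (sqnorm a' (mvmul a (fst XY) (ens_alice ps k)) * sqnorm b' (mvmul b (snd XY) (ens_bob ps k))))"

definition label_weight :: "nat \<Rightarrow> nat \<Rightarrow> nat \<Rightarrow> nat \<Rightarrow> ensemble \<Rightarrow> (cmat \<times> cmat) list \<Rightarrow> (nat \<Rightarrow> nat) \<Rightarrow> nat \<Rightarrow> real" where
  "label_weight a b a' b' ps L lab c = (\<Sum>l | l < length L \<and> lab l = c. leaf_weight a b a' b' ps (L ! l))"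

definition locc_value :: "nat \<Rightarrow> nat \<Rightarrow> bop \<Rightarrow> nat \<Rightarrow> nat \<Rightarrow> (cmat \<times> cmat) list \<Rightarrow> (nat \<Rightarrow> nat) \<Rightarrow> real" where
  "locc_value dA dB X a' b' L lab = (\<Sum>c\<in>lab ` {..<length L}. cmod (trprod dA dB (povm_elem a' b' L lab c) X))"

lemma locc_norm_eq_Sup_locc_value:
  "locc_norm dA dB X = Sup {locc_value dA dB X a' b' L lab | a' b' L lab. locc dA dB a' b' L}"
  by (simp add: locc_norm_def locc_value_def)

lemma povm_elem_eq_sum_leaf_effect:
  "povm_elem a' b' L lab c = (\<lambda>p q. \<Sum>l | l < length L \<and> lab l = c. leaf_effect a' b' (L ! l) p q)"
  by (intro ext) (auto simp: povm_elem_def leaf_effect_def case_prod_beta)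

lemma trprod_sum_left:
  "finite I \<Longrightarrow> trprod a b (\<lambda>p q. \<Sum>k\<in>I. F k p q) X = (\<Sum>k\<in>I. trprod a b (F k) X)"
  by (simp add: trprod_def sum_distrib_right sum.swap[where B = I])

lemma trprod_sum_right:
  "finite I \<Longrightarrow> trprod a b M (\<lambda>p q. \<Sum>k\<in>I. F k p q) = (\<Sum>k\<in>I. trprod a b M (F k))"
  by (simp add: trprod_def sum_distrib_left sum.swap[where B = I])

lemma trprod_scale_right: "trprod a b M (\<lambda>p q. c * F p q) = c * trprod a b M F"
  by (simp add: trprod_def sum_distrib_left mult_ac)

lemma trprod_diff_right: "trprod a b M (\<lambda>p q. X p q - Y p q) = trprod a b M X - trprod a b M Y"
  by (simp add: trprod_def right_diff_distrib sum_subtractf)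

lemma trprod_cong_right:
  assumes "\<And>x y x' y'. x < a \<Longrightarrow> y < b \<Longrightarrow> x' < a \<Longrightarrow> y' < b \<Longrightarrow> X (x, y) (x', y') = X' (x, y) (x', y')"
  shows "trprod a b M X = trprod a b M X'"
  unfolding trprod_def using assms by (intro sum.cong refl) auto

lemma trprod_leaf_effect_prod_ketbra:
  "trprod a b (leaf_effect a' b' XY) (prod_ketbra u v) =
     complex_of_real (sqnorm a' (mvmul a (fst XY) u) * sqnorm b' (mvmul b (snd XY) v))"
proof -
  have "trprod a b (leaf_effect a' b' XY) (prod_ketbra u v) =
     (\<Sum>x<a. \<Sum>x'<a. (\<Sum>i<a'. cnj (fst XY i x) * fst XY i x') * (cnj (u x) * u x')) *
     (\<Sum>y<b. \<Sum>y'<b. (\<Sum>j<b'. cnj (snd XY j y) * snd XY j y') * (cnj (v y) * v y'))"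
    unfolding trprod_def leaf_effect_def sum_product by (simp add: sum_distrib_left sum.swap[of _ "{..<b'}"] mult_ac)
  then show ?thesis
    by (simp add: of_real_sqnorm cinner_mvmul)
qed

lemma trprod_povm_elem:
  assumes "ensemble_rep dA dB \<rho> ps"
  shows "trprod dA dB (povm_elem a' b' L lab c) \<rho> = complex_of_real (label_weight dA dB a' b' ps L lab c)"
proof -
  have "trprod dA dB (leaf_effect a' b' XY) \<rho> = trprod dA dB (leaf_effect a' b' XY)
      (\<lambda>p q. \<Sum>k<length ps. complex_of_real (ens_prob ps k) * prod_ketbra (ens_alice ps k) (ens_bob ps k) p q)" for XY
    using assms unfolding ensemble_rep_def by (intro trprod_cong_right) auto
  then show ?thesis
    by (simp add: povm_elem_eq_sum_leaf_effect trprod_sum_left trprod_sum_right trprod_scale_right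
        trprod_leaf_effect_prod_ketbra label_weight_def leaf_weight_def)
qed

lemma leaf_weight_nonneg: "prob_ensemble dA dB ps \<Longrightarrow> 0 \<le> leaf_weight a b a' b' ps XY"
  unfolding leaf_weight_def prob_ensemble_def by (intro sum_nonneg mult_nonneg_nonneg) (auto simp: sqnorm_nonneg)

lemma label_weight_nonneg: "prob_ensemble dA dB ps \<Longrightarrow> 0 \<le> label_weight a b a' b' ps L lab c"
  unfolding label_weight_def by (intro sum_nonneg leaf_weight_nonneg)

lemma sum_leaf_weight:
  assumes "locc dA dB a' b' L" and "prob_ensemble dA dB ps"
  shows "(\<Sum>l<length L. leaf_weight dA dB a' b' ps (L ! l)) = 1"
proof -
  have "(\<Sum>l<length L. leaf_weight dA dB a' b' ps (L ! l)) =
      (\<Sum>k<length ps. ens_prob ps k * (\<Sum>l<length L.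
         sqnorm a' (mvmul dA (fst (L ! l)) (ens_alice ps k)) * sqnorm b' (mvmul dB (snd (L ! l)) (ens_bob ps k))))"
    unfolding leaf_weight_def by (subst sum.swap) (simp add: sum_distrib_left)
  also have "\<dots> = 1"
    using assms locc_leaf_sqnorm_sum[OF assms(1)]
    by (simp add: prob_ensemble_def sum_list_sum_nth atLeast0LessThan)
  finally show ?thesis .
qed

lemma sum_by_label: "(\<Sum>l<length L. f l) = (\<Sum>c\<in>lab ` {..<length L}. \<Sum>l | l < length L \<and> lab l = c. f l)"
  by (subst sum.image_gen[of "{..<length L}" f lab]) simp_all

lemma sum_label_weight:
  assumes "locc dA dB a' b' L" and "prob_ensemble dA dB ps"
  shows "(\<Sum>c\<in>lab ` {..<length L}. label_weight dA dB a' b' ps L lab c) = 1"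
  using sum_leaf_weight[OF assms] unfolding label_weight_def sum_by_label[where lab = lab] .

lemma sum_leaf_weight_measure_leaf:
  "(\<Sum>p<a' * b'. leaf_weight dA dB 1 1 ps (measure_leaf a' b' XY ! p)) = leaf_weight dA dB a' b' ps XY"
proof -
  have "sqnorm 1 (mvmul d (mmul n (bra i) X) u) = (cmod (mvmul d X u i))\<^sup>2" if "i < n" for d n i X u
    using that unfolding mvmul_mmul by (simp add: sqnorm_def mvmul_def bra_def if_distrib[of "\<lambda>t. t * _"] cong: if_cong)
  then have "(\<Sum>p<a' * b'. leaf_weight dA dB 1 1 ps (measure_leaf a' b' XY ! p)) =
      (\<Sum>i<a'. \<Sum>j<b'. \<Sum>k<length ps. ens_prob ps k *
         ((cmod (mvmul dA (fst XY) (ens_alice ps k) i))\<^sup>2 * (cmod (mvmul dB (snd XY) (ens_bob ps k) j))\<^sup>2))"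
    unfolding sum_lessThan_mult
    by (intro sum.cong refl) (simp add: nth_measure_leaf leaf_weight_def)
  also have "\<dots> = (\<Sum>k<length ps. \<Sum>i<a'. \<Sum>j<b'. ens_prob ps k *
         ((cmod (mvmul dA (fst XY) (ens_alice ps k) i))\<^sup>2 * (cmod (mvmul dB (snd XY) (ens_bob ps k) j))\<^sup>2))"
    by (subst sum.swap, rule sum.cong[OF refl], rule sum.swap)
  also have "\<dots> = leaf_weight dA dB a' b' ps XY"
    unfolding leaf_weight_def sqnorm_def sum_product by (simp only: sum_distrib_left)
  finally show ?thesis .
qed

lemma sum_leaf_weight_measure_outputs:
  "(\<Sum>m<length (concat (map (measure_leaf a' b') L)).
      leaf_weight dA dB 1 1 (ps (m div (a' * b'))) (concat (map (measure_leaf a' b') L) ! m)) =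
   (\<Sum>l<length L. leaf_weight dA dB a' b' (ps l) (L ! l))"
proof -
  have len: "\<forall>xs\<in>set (map (measure_leaf a' b') L). length xs = a' * b'"
    by simp
  have div: "(l * (a' * b') + p) div (a' * b') = l" if "p < a' * b'" for l p
    using that by (cases "a' * b' = 0") auto
  have "(\<Sum>m<length (concat (map (measure_leaf a' b') L)).
      leaf_weight dA dB 1 1 (ps (m div (a' * b'))) (concat (map (measure_leaf a' b') L) ! m)) =
    (\<Sum>l<length L. \<Sum>p<a' * b'. leaf_weight dA dB 1 1 (ps l) (measure_leaf a' b' (L ! l) ! p))"
    unfolding length_concat_equal_length[OF len] length_map sum_lessThan_mult[where d = "length L" and m = "a' * b'"]
    by (intro sum.cong refl) (simp add: nth_concat_equal_length[OF len] div)
  then show ?thesis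
    by (simp only: sum_leaf_weight_measure_leaf)
qed

section \<open>The memory update\<close>

lemma kraus_apply_sum:
  assumes "finite I"
  shows "kraus_apply a b KA KB (\<lambda>p q. \<Sum>k\<in>I. F k p q) = (\<lambda>p q. \<Sum>k\<in>I. kraus_apply a b KA KB (F k) p q)"
  by (intro ext) (simp add: kraus_apply_def case_prod_beta sum_distrib_left sum_distrib_right sum.swap[where B=I])

lemma kraus_apply_scale:
  "kraus_apply a b KA KB (\<lambda>p q. c * F p q) = (\<lambda>p q. c * kraus_apply a b KA KB F p q)"
  by (intro ext) (simp add: kraus_apply_def case_prod_beta sum_distrib_left mult_ac)

lemma kraus_apply_cong:
  assumes "\<And>x y x' y'. x < a \<Longrightarrow> y < b \<Longrightarrow> x' < a \<Longrightarrow> y' < b \<Longrightarrow> J (x, y) (x', y') = J' (x, y) (x', y')"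
  shows "kraus_apply a b KA KB J = kraus_apply a b KA KB J'"
  unfolding kraus_apply_def using assms by (intro ext) (auto simp: case_prod_beta intro!: sum.cong)

lemma kraus_apply_lincomb:
  assumes "finite I"
    and "\<And>x y x' y'. x < a \<Longrightarrow> y < b \<Longrightarrow> x' < a \<Longrightarrow> y' < b \<Longrightarrow>
           J (x, y) (x', y') = (\<Sum>k\<in>I. c k * F k (x, y) (x', y'))"
  shows "kraus_apply a b KA KB J = (\<lambda>p q. \<Sum>k\<in>I. c k * kraus_apply a b KA KB (F k) p q)"
proof -
  have "kraus_apply a b KA KB J = kraus_apply a b KA KB (\<lambda>p q. \<Sum>k\<in>I. c k * F k p q)"
    using assms(2) by (intro kraus_apply_cong) auto
  then show ?thesis
    by (simp add: kraus_apply_sum[OF assms(1)] kraus_apply_scale)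
qed

lemma mem_update_lincomb:
  assumes "finite I" and "0 < mA" and "0 < mB"
    and "\<And>i j i' j'. i < mA \<Longrightarrow> j < mB \<Longrightarrow> i' < mA \<Longrightarrow> j' < mB \<Longrightarrow>
           \<mu> (i, j) (i', j') = (\<Sum>k\<in>I. c k * \<nu> k (i, j) (i', j'))"
  shows "mem_update dA dB mA mB K \<rho> \<mu> = (\<lambda>p q. \<Sum>k\<in>I. c k * mem_update dA dB mA mB K \<rho> (\<nu> k) p q)"
  unfolding mem_update_def
proof (rule kraus_apply_lincomb[OF assms(1)])
  fix x y x' y'
  show "joint_in mA mB \<rho> \<mu> (x, y) (x', y') = (\<Sum>k\<in>I. c k * joint_in mA mB \<rho> (\<nu> k) (x, y) (x', y'))"
    using assms(2-3) assms(4)[of "x mod mA" "y mod mB" "x' mod mA" "y' mod mB"]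
    by (simp add: joint_in_def sum_distrib_left mult_ac)
qed

lemma succ_prob_lincomb:
  assumes I: "finite I" and mA: "0 < mA" and mB: "0 < mB"
    and "\<And>i j i' j'. i < mA \<Longrightarrow> j < mB \<Longrightarrow> i' < mA \<Longrightarrow> j' < mB \<Longrightarrow>
           \<mu> (i, j) (i', j') = (\<Sum>k\<in>I. complex_of_real (c k) * \<nu> k (i, j) (i', j'))"
  shows "succ_prob dA dB mA mB \<rho>0 \<rho>1 S h \<mu> n t = (\<Sum>k\<in>I. c k * succ_prob dA dB mA mB \<rho>0 \<rho>1 S h (\<nu> k) n t)"
  using assms(4)
proof (induction n arbitrary: h \<mu> \<nu> t)
  case 0
  then have "btrace mA mB \<mu> = (\<Sum>k\<in>I. complex_of_real (c k) * btrace mA mB (\<nu> k))"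
    unfolding btrace_def by (simp add: sum_distrib_left sum.swap[of _ I])
  then show ?case
    by (simp add: Re_sum sum_distrib_left)
next
  case (Suc n)
  let ?upd = "\<lambda>l z \<mu>'. mem_update dA dB mA mB (fst (S h) ! l) (if z then \<rho>1 else \<rho>0) \<mu>'"
  have "succ_prob dA dB mA mB \<rho>0 \<rho>1 S (h @ [l]) (?upd l z \<mu>) n t'
      = (\<Sum>k\<in>I. c k * succ_prob dA dB mA mB \<rho>0 \<rho>1 S (h @ [l]) (?upd l z (\<nu> k)) n t')" for l z t'
    by (rule Suc.IH) (simp add: mem_update_lincomb[OF I mA mB, of \<mu> c \<nu>, OF Suc.prems])
  then show ?case
    by (simp add: sum_distrib_left sum.swap[of _ I] mult_ac)
qed

definition polar_vec :: "nat \<Rightarrow> nat \<Rightarrow> nat \<Rightarrow> cvec" where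
  "polar_vec i s i' = (\<lambda>x. (if x = i then 1 else 0) + \<i> ^ s * (if x = i' then 1 else 0))"

lemma polarization:
  "(\<Sum>s<4. \<i> ^ s * (polar_vec i s i' x * cnj (polar_vec i s i' x'))) = (if x = i \<and> x' = i' then 4 else 0)"
  by (simp add: polar_vec_def eval_nat_numeral algebra_simps)

lemma prod_ketbra_expansion:
  fixes \<mu> :: bop
  obtains I :: "(nat \<times> nat \<times> nat \<times> nat \<times> nat \<times> nat) set" and C \<alpha> \<beta> where "finite I"
    "\<And>x y x' y'. x < mA \<Longrightarrow> y < mB \<Longrightarrow> x' < mA \<Longrightarrow> y' < mB \<Longrightarrow>
        \<mu> (x, y) (x', y') = (\<Sum>k\<in>I. C k * prod_ketbra (\<alpha> k) (\<beta> k) (x, y) (x', y'))"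
proof
  let ?I = "{..<mA} \<times> {..<mB} \<times> {..<mA} \<times> {..<mB} \<times> {..<4::nat} \<times> {..<4::nat}"
  let ?C = "\<lambda>(i, j, i', j', s, s'). \<mu> (i, j) (i', j') / 16 * \<i> ^ s * \<i> ^ s'"
  let ?\<alpha> = "\<lambda>(i::nat, j::nat, i', j'::nat, s, s'::nat). polar_vec i s i'"
  let ?\<beta> = "\<lambda>(i, j::nat, i'::nat, j', s::nat, s'). polar_vec j s' j'"
  show "finite ?I"
    by simp
  fix x y x' y' assume "x < mA" "y < mB" "x' < mA" "y' < mB"
  have "(\<Sum>k\<in>?I. ?C k * prod_ketbra (?\<alpha> k) (?\<beta> k) (x, y) (x', y')) =
      (\<Sum>i<mA. \<Sum>j<mB. \<Sum>i'<mA. \<Sum>j'<mB. \<Sum>s<4. \<Sum>s'<4. \<mu> (i, j) (i', j') / 16 *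
        ((\<i> ^ s * (polar_vec i s i' x * cnj (polar_vec i s i' x'))) *
         (\<i> ^ s' * (polar_vec j s' j' y * cnj (polar_vec j s' j' y')))))"
    unfolding sum.cartesian_product by (intro sum.cong refl) (auto simp: mult_ac)
  also have "\<dots> = (\<Sum>i<mA. \<Sum>j<mB. \<Sum>i'<mA. \<Sum>j'<mB. \<mu> (i, j) (i', j') / 16 *
        ((\<Sum>s<4. \<i> ^ s * (polar_vec i s i' x * cnj (polar_vec i s i' x'))) *
         (\<Sum>s'<4. \<i> ^ s' * (polar_vec j s' j' y * cnj (polar_vec j s' j' y')))))"
    unfolding sum_product by (simp only: sum_distrib_left)
  also have "\<dots> = (\<Sum>i<mA. \<Sum>j<mB. \<Sum>i'<mA. \<Sum>j'<mB.
      if j' = y' then if i' = x' then if j = y then if i = x then \<mu> (i, j) (i', j') else 0 else 0 else 0 else 0)"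
    unfolding polarization by (intro sum.cong refl) auto
  also have "\<dots> = \<mu> (x, y) (x', y')"
    using \<open>x < mA\<close> \<open>y < mB\<close> \<open>x' < mA\<close> \<open>y' < mB\<close> by simp
  finally show "\<mu> (x, y) (x', y') = (\<Sum>k\<in>?I. ?C k * prod_ketbra (?\<alpha> k) (?\<beta> k) (x, y) (x', y'))"
    by simp
qed

lemma hermitian_prod_ketbra_expansion:
  fixes \<mu> :: bop
  assumes herm: "\<forall>p\<in>{..<mA} \<times> {..<mB}. \<forall>q\<in>{..<mA} \<times> {..<mB}. \<mu> q p = cnj (\<mu> p q)"
  obtains I :: "(nat \<times> nat \<times> nat \<times> nat \<times> nat \<times> nat) set" and c :: "_ \<Rightarrow> real" and \<alpha> \<beta> where "finite I"
    "\<And>x y x' y'. x < mA \<Longrightarrow> y < mB \<Longrightarrow> x' < mA \<Longrightarrow> y' < mB \<Longrightarrow>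
        \<mu> (x, y) (x', y') = (\<Sum>k\<in>I. complex_of_real (c k) * prod_ketbra (\<alpha> k) (\<beta> k) (x, y) (x', y'))"
proof -
  obtain I :: "(nat \<times> nat \<times> nat \<times> nat \<times> nat \<times> nat) set" and C \<alpha> \<beta> where "finite I" and
    expansion: "\<And>x y x' y'. x < mA \<Longrightarrow> y < mB \<Longrightarrow> x' < mA \<Longrightarrow> y' < mB \<Longrightarrow>
        \<mu> (x, y) (x', y') = (\<Sum>k\<in>I. C k * prod_ketbra (\<alpha> k) (\<beta> k) (x, y) (x', y'))"
    by (rule prod_ketbra_expansion[where mA = mA and mB = mB and \<mu> = \<mu>]) blast
  have real_combination: "\<mu> (x, y) (x', y') = (\<Sum>k\<in>I. complex_of_real (Re (C k)) * prod_ketbra (\<alpha> k) (\<beta> k) (x, y) (x', y'))"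
    if xy: "x < mA" "y < mB" "x' < mA" "y' < mB" for x y x' y'
  proof -
    have "(x', y') \<in> {..<mA} \<times> {..<mB}" "(x, y) \<in> {..<mA} \<times> {..<mB}"
      using xy by auto
    then have "\<mu> (x, y) (x', y') = cnj (\<mu> (x', y') (x, y))"
      using herm by blast
    also have "\<dots> = (\<Sum>k\<in>I. cnj (C k) * prod_ketbra (\<alpha> k) (\<beta> k) (x, y) (x', y'))"
      unfolding expansion[OF xy(3,4,1,2)] cnj_sum complex_cnj_mult cnj_prod_ketbra ..
    finally have "2 * \<mu> (x, y) (x', y') =
        (\<Sum>k\<in>I. (C k + cnj (C k)) * prod_ketbra (\<alpha> k) (\<beta> k) (x, y) (x', y'))"
      using expansion[OF xy] by (simp add: distrib_right sum.distrib)
    then show ?thesis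
      by (simp add: complex_add_cnj sum_distrib_left[symmetric] mult.assoc)
  qed
  show ?thesis
    by (rule that[OF \<open>finite I\<close>]) (rule real_combination)
qed

lemma mem_update_prod_ketbra:
  assumes "ensemble_rep dA dB \<rho> ps" and "0 < mA" and "0 < mB"
  shows "mem_update dA dB mA mB K \<rho> (prod_ketbra a b) =
    (\<lambda>p q. \<Sum>k<length ps. complex_of_real (ens_prob ps k) *
        prod_ketbra (mvmul (dA * mA) (fst K) (vtensor mA (ens_alice ps k) a))
                    (mvmul (dB * mB) (snd K) (vtensor mB (ens_bob ps k) b)) p q)"
proof -
  have joint: "joint_in mA mB \<rho> (prod_ketbra a b) (x, y) (x', y') =
      (\<Sum>k<length ps. complex_of_real (ens_prob ps k) *
         prod_ketbra (vtensor mA (ens_alice ps k) a) (vtensor mB (ens_bob ps k) b) (x, y) (x', y'))"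
    if "x < dA * mA" "y < dB * mB" "x' < dA * mA" "y' < dB * mB" for x y x' y'
  proof -
    have "x div mA < dA" "y div mB < dB" "x' div mA < dA" "y' div mB < dB"
      using that by (simp_all add: less_mult_imp_div_less)
    then show ?thesis
      using assms(1) unfolding ensemble_rep_def
      by (simp add: joint_in_def vtensor_def sum_distrib_left mult_ac)
  qed
  show ?thesis
    unfolding mem_update_def kraus_apply_prod_ketbra[symmetric]
    by (rule kraus_apply_lincomb[where c = "\<lambda>k. complex_of_real (ens_prob ps k)"
          and F = "\<lambda>k. prod_ketbra (vtensor mA (ens_alice ps k) a) (vtensor mB (ens_bob ps k) b)", OF finite_lessThan joint])
qed

text \<open>The unnormalised product memory state after the leaf \<open>K\<close>, when the memory was \<open>v\<close> and the
  \<open>k\<close>-th member of the ensemble was given.\<close>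
definition branch_memory :: "nat \<Rightarrow> nat \<Rightarrow> nat \<Rightarrow> nat \<Rightarrow> cmat \<times> cmat \<Rightarrow> ensemble \<Rightarrow> cvec \<times> cvec \<Rightarrow> nat \<Rightarrow> cvec \<times> cvec" where
  "branch_memory dA dB mA mB K ps v k =
     (mvmul (dA * mA) (fst K) (vtensor mA (ens_alice ps k) (fst v)),
      mvmul (dB * mB) (snd K) (vtensor mB (ens_bob ps k) (snd v)))"

lemma succ_prob_Suc_prod_ketbra:
  assumes "ensemble_rep dA dB \<rho>0 ps0" and "ensemble_rep dA dB \<rho>1 ps1" and mA: "0 < mA" and mB: "0 < mB"
  defines "ps \<equiv> \<lambda>z. if z then ps1 else ps0"
  shows "succ_prob dA dB mA mB \<rho>0 \<rho>1 S h (prod_ketbra (fst v) (snd v)) (Suc n) t =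
   (\<Sum>z\<in>UNIV. 1/2 * (\<Sum>l<length (fst (S h)). \<Sum>k<length (ps z). ens_prob (ps z) k *
      succ_prob dA dB mA mB \<rho>0 \<rho>1 S (h @ [l])
        (case branch_memory dA dB mA mB (fst (S h) ! l) (ps z) v k of (a, b) \<Rightarrow> prod_ketbra a b) n
        (t - (if snd (S h) l = z then 1 else 0))))"
proof -
  have rep: "ensemble_rep dA dB (if z then \<rho>1 else \<rho>0) (ps z)" for z
    using assms(1,2) by (simp add: ps_def)
  have "succ_prob dA dB mA mB \<rho>0 \<rho>1 S (h @ [l])
      (mem_update dA dB mA mB (fst (S h) ! l) (if z then \<rho>1 else \<rho>0) (prod_ketbra (fst v) (snd v))) n t'
    = (\<Sum>k<length (ps z). ens_prob (ps z) k * succ_prob dA dB mA mB \<rho>0 \<rho>1 S (h @ [l])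
        (case branch_memory dA dB mA mB (fst (S h) ! l) (ps z) v k of (a, b) \<Rightarrow> prod_ketbra a b) n t')" for l z t'
    unfolding mem_update_prod_ketbra[OF rep mA mB]
    by (rule succ_prob_lincomb[OF _ mA mB]) (simp_all add: branch_memory_def)
  then show ?thesis
    by (simp only: succ_prob.simps)
qed

definition prod_weight :: "nat \<Rightarrow> nat \<Rightarrow> cvec \<times> cvec \<Rightarrow> real" where
  "prod_weight mA mB v = sqnorm mA (fst v) * sqnorm mB (snd v)"

lemma prod_weight_nonneg: "0 \<le> prod_weight mA mB v"
  by (simp add: prod_weight_def sqnorm_nonneg)

lemma btrace_prod_ketbra_prod_weight: "btrace mA mB (prod_ketbra (fst v) (snd v)) = prod_weight mA mB v"
  by (simp add: btrace_prod_ketbra prod_weight_def)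

lemma sum_branch_weight:
  assumes L: "locc (dA * mA) (dB * mB) mA mB L" and ps: "prob_ensemble dA dB ps" and "0 < mA" and "0 < mB"
  shows "(\<Sum>l<length L. \<Sum>k<length ps. ens_prob ps k * prod_weight mA mB (branch_memory dA dB mA mB (L ! l) ps v k))
    = prod_weight mA mB v"
proof -
  have "(\<Sum>l<length L. \<Sum>k<length ps. ens_prob ps k * prod_weight mA mB (branch_memory dA dB mA mB (L ! l) ps v k))
      = (\<Sum>k<length ps. ens_prob ps k * (sqnorm (dA * mA) (vtensor mA (ens_alice ps k) (fst v)) *
                                          sqnorm (dB * mB) (vtensor mB (ens_bob ps k) (snd v))))"
    using locc_leaf_sqnorm_sum[OF L]
    by (subst sum.swap) (simp add: prod_weight_def branch_memory_def sum_distrib_left[symmetric]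
        sum_list_sum_nth atLeast0LessThan)
  also have "\<dots> = prod_weight mA mB v"
    using ps assms(3,4) by (simp add: prob_ensemble_def sqnorm_vtensor prod_weight_def sum_distrib_right[symmetric])
  finally show ?thesis .
qed

text \<open>Given a product memory state, a round is an LOCC measurement of the input alone: the
  memory vectors are absorbed into the protocol through the isometries \<^const>\<open>tensor_ket\<close>.\<close>
lemma locc_absorb_product_memory:
  assumes L: "locc (dA * mA) (dB * mB) mA mB L" and mA: "0 < mA" and mB: "0 < mB"
    and v: "0 < prod_weight mA mB v"
  obtains L' where "locc dA dB mA mB L'" and "length L' = length L"
    and "\<And>ps l. l < length L \<Longrightarrow>
      (\<Sum>k<length ps. ens_prob ps k * prod_weight mA mB (branch_memory dA dB mA mB (L ! l) ps v k)) =
      prod_weight mA mB v * leaf_weight dA dB mA mB ps (L' ! l)"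
proof -
  define \<alpha> \<beta> where weights: "\<alpha> = sqnorm mA (fst v)" "\<beta> = sqnorm mB (snd v)"
  have "0 < \<alpha>" "0 < \<beta>"
    using v sqnorm_nonneg[of mA "fst v"] sqnorm_nonneg[of mB "snd v"]
    unfolding weights prod_weight_def by (auto simp: zero_less_mult_iff)
  obtain a0 b0 where a0: "sqnorm mA a0 = 1" "fst v = (\<lambda>i. complex_of_real (sqrt \<alpha>) * a0 i)"
    and b0: "sqnorm mB b0 = 1" "snd v = (\<lambda>i. complex_of_real (sqrt \<beta>) * b0 i)"
    using sqnorm_normalize[of mA "fst v"] sqnorm_normalize[of mB "snd v"] \<open>0 < \<alpha>\<close> \<open>0 < \<beta>\<close>
    unfolding weights by metis
  have "sqnorm mA (mvmul (dA * mA) X (vtensor mA u (fst v))) =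
      \<alpha> * sqnorm mA (mvmul dA (mmul (dA * mA) X (tensor_ket mA a0)) u)" for X u
    using \<open>0 < \<alpha>\<close> by (simp add: a0(2) sqnorm_mvmul_vtensor_scaled)
  moreover have "sqnorm mB (mvmul (dB * mB) Y (vtensor mB u (snd v))) =
      \<beta> * sqnorm mB (mvmul dB (mmul (dB * mB) Y (tensor_ket mB b0)) u)" for Y u
    using \<open>0 < \<beta>\<close> by (simp add: b0(2) sqnorm_mvmul_vtensor_scaled)
  ultimately show ?thesis
  proof (intro that)
    show "locc dA dB mA mB (map (\<lambda>(X, Y). (X, mmul (dB * mB) Y (tensor_ket mB b0)))
                              (map (\<lambda>(X, Y). (mmul (dA * mA) X (tensor_ket mA a0), Y)) L))"
      by (intro locc_precompose_bob locc_precompose_alice L kraus_complete_tensor_ket a0(1) b0(1) mA mB)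
  qed (simp_all add: leaf_weight_def branch_memory_def prod_weight_def weights case_prod_beta sum_distrib_left mult_ac)
qed

lemma prod_weight_branch_memory_1:
  "prod_weight 1 1 (branch_memory dA dB 1 1 K ps v k) =
     prod_weight 1 1 v * (sqnorm 1 (mvmul dA (fst K) (ens_alice ps k)) * sqnorm 1 (mvmul dB (snd K) (ens_bob ps k)))"
proof -
  have "vtensor 1 u a = (\<lambda>x. a 0 * u x)" for u a
    by (simp add: vtensor_def mult.commute)
  then show ?thesis
    by (simp add: prod_weight_def branch_memory_def mvmul_scale sqnorm_scale sqnorm_def)
qed

lemma density_trivial_memory: "density 1 1 (prod_ketbra (\<lambda>_. 1) (\<lambda>_. 1))"
  unfolding density_def
proof (intro conjI allI ballI)
  show "prod_ketbra (\<lambda>_. 1) (\<lambda>_. 1) q p = cnj (prod_ketbra (\<lambda>_. 1) (\<lambda>_. 1) p q)" for p q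
    by (simp add: cnj_prod_ketbra)
  show "0 \<le> Re (\<Sum>p\<in>{..<1} \<times> {..<1}. \<Sum>q\<in>{..<1} \<times> {..<1}. cnj (v p) * prod_ketbra (\<lambda>_. 1) (\<lambda>_. 1) p q * v q)"
    for v :: "nat \<times> nat \<Rightarrow> complex"
    by (simp add: lessThan_Suc power2_eq_square[symmetric])
  show "btrace 1 1 (prod_ketbra (\<lambda>_. 1) (\<lambda>_. 1)) = 1"
    by (simp add: btrace_def)
qed

section \<open>Chernoff bounds for guessing games\<close>

definition chernoff_factor :: "real \<Rightarrow> real \<Rightarrow> real \<Rightarrow> real" where
  "chernoff_factor p r lam = (1 + (lam - 1) * p) * lam powr - r"

lemma chernoff_factor_at_1 [simp]: "chernoff_factor p r 1 = 1"
  by (simp add: chernoff_factor_def)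

lemma chernoff_factor_power:
  assumes "0 < lam"
  shows "(1 + (lam - 1) * p) ^ n * lam powr - (r * real n) = chernoff_factor p r lam ^ n"
proof -
  have "lam powr - (r * real n) = (lam powr - r) powr real n"
    by (simp add: powr_powr)
  also have "\<dots> = (lam powr - r) ^ n"
    using assms by (simp add: powr_realpow)
  finally show ?thesis
    by (simp add: chernoff_factor_def power_mult_distrib)
qed

lemma chernoff_factor_deriv: "(chernoff_factor p r has_real_derivative p - r) (at 1)"
proof -
  have "((\<lambda>lam. (1 + (lam - 1) * p) * lam powr - r) has_real_derivative p * 1 powr - r + (1 + (1 - 1) * p) * (- r * 1 powr (- r - 1))) (at 1)"
    by (intro DERIV_mult has_real_derivative_powr derivative_eq_intros) auto
  then show ?thesis
    by (simp add: chernoff_factor_def[abs_def])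
qed

lemma exists_chernoff_factor_above:
  assumes "p < r"
  shows "\<exists>lam>1. chernoff_factor p r lam < 1"
proof -
  obtain d where "d > 0" and dec: "\<And>h. 0 < h \<Longrightarrow> h < d \<Longrightarrow> chernoff_factor p r (1 + h) < chernoff_factor p r 1"
    using DERIV_neg_dec_right[OF chernoff_factor_deriv] assms by force
  then have "chernoff_factor p r (1 + d / 2) < 1"
    using dec[of "d / 2"] by simp
  then show ?thesis
    using \<open>d > 0\<close> by (intro exI[of _ "1 + d / 2"]) auto
qed

lemma exists_chernoff_factor_below:
  assumes "r < q"
  shows "\<exists>lam. 0 < lam \<and> lam < 1 \<and> chernoff_factor q r lam < 1"
proof -
  obtain d where "d > 0" and inc: "\<And>h. 0 < h \<Longrightarrow> h < d \<Longrightarrow> chernoff_factor q r (1 - h) < chernoff_factor q r 1"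
    using DERIV_pos_inc_left[OF chernoff_factor_deriv] assms by force
  then have "chernoff_factor q r (1 - min (d / 2) (1 / 2)) < 1"
    using inc[of "min (d / 2) (1 / 2)"] by simp
  then show ?thesis
    using \<open>d > 0\<close> by (intro exI[of _ "1 - min (d / 2) (1 / 2)"]) auto
qed

text \<open>An abstract guessing game: \<open>sp h v n t\<close> is the weight of the runs of \<open>n\<close> further rounds,
  from history \<open>h\<close> and unnormalised state \<open>v\<close>, with at least \<open>t\<close> correct guesses.  In each round
  the hidden bit \<open>z\<close> is uniform, the leaf \<open>l\<close> carries the guess \<open>G h l\<close>, and the state moves to
  \<open>ch h v z l k\<close> with weight \<open>w z k\<close>; the total weight \<open>N\<close> is conserved.
  \<open>win h v\<close> is the weight of a correct guess in the next round.\<close>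
locale guessing_game =
  fixes sp :: "'h \<Rightarrow> 'v \<Rightarrow> nat \<Rightarrow> real \<Rightarrow> real" and N :: "'v \<Rightarrow> real"
    and L :: "'h \<Rightarrow> nat" and K :: "bool \<Rightarrow> nat" and w :: "bool \<Rightarrow> nat \<Rightarrow> real"
    and ch :: "'h \<Rightarrow> 'v \<Rightarrow> bool \<Rightarrow> nat \<Rightarrow> nat \<Rightarrow> 'v" and G :: "'h \<Rightarrow> nat \<Rightarrow> bool"
    and nxt :: "'h \<Rightarrow> nat \<Rightarrow> 'h"
  assumes sp_0: "sp h v 0 t = (if t \<le> 0 then N v else 0)"
    and sp_Suc: "sp h v (Suc n) t = (\<Sum>z\<in>UNIV. 1/2 *
          (\<Sum>l<L h. \<Sum>k<K z. w z k * sp (nxt h l) (ch h v z l k) n (t - (if G h l = z then 1 else 0))))"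
    and N_nonneg: "0 \<le> N v"
    and w_nonneg: "k < K z \<Longrightarrow> 0 \<le> w z k"
    and N_conserved: "(\<Sum>l<L h. \<Sum>k<K z. w z k * N (ch h v z l k)) = N v"
begin

definition win :: "'h \<Rightarrow> 'v \<Rightarrow> real" where
  "win h v = 1/2 * (\<Sum>l<L h. \<Sum>k<K (G h l). w (G h l) k * N (ch h v (G h l) l k))"

lemma sp_nonneg: "0 \<le> sp h v n t"
proof (induction n arbitrary: h v t)
  case 0
  then show ?case
    by (simp add: sp_0 N_nonneg)
next
  case (Suc n)
  then show ?case
    unfolding sp_Suc by (intro sum_nonneg mult_nonneg_nonneg) (auto simp: w_nonneg)
qed

lemma tilted_step:
  assumes "0 < lam"
  shows "(\<Sum>z\<in>UNIV. 1/2 * (\<Sum>l<L h. \<Sum>k<K z.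
            w z k * (N (ch h v z l k) * C * lam powr - (t - (if G h l = z then 1 else 0))))) =
         C * lam powr - t * (N v + (lam - 1) * win h v)"
proof -
  define W where "W z l = (\<Sum>k<K z. w z k * N (ch h v z l k))" for z l
  have "lam powr - (t - 1) = lam powr - t * lam"
    using assms powr_add[of lam "- t" 1] by simp
  then have "(\<Sum>k<K z. w z k * (N (ch h v z l k) * C * lam powr - (t - (if G h l = z then 1 else 0)))) =
      C * lam powr - t * (W z l + (lam - 1) * (if G h l = z then W z l else 0))" for z l
    unfolding W_def by (cases "G h l = z") (simp_all add: sum_distrib_left sum_subtractf algebra_simps)
  then have "(\<Sum>z\<in>UNIV. 1/2 * (\<Sum>l<L h. \<Sum>k<K z.
            w z k * (N (ch h v z l k) * C * lam powr - (t - (if G h l = z then 1 else 0))))) =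
      C * lam powr - t * ((\<Sum>z\<in>UNIV. 1/2 * (\<Sum>l<L h. W z l)) +
        (lam - 1) * (1/2 * (\<Sum>l<L h. \<Sum>z\<in>UNIV. if G h l = z then W z l else 0)))"
    by (simp add: sum_distrib_left distrib_left sum.distrib sum.swap[of _ "{..<L h}"] mult_ac del: sum.delta')
  also have "\<dots> = C * lam powr - t * (N v + (lam - 1) * win h v)"
    by (simp add: W_def N_conserved win_def UNIV_bool)
  finally show ?thesis .
qed

lemma sp_le_tilted:
  assumes lam: "1 < lam" and p: "0 \<le> p" and win_le: "\<And>h v. win h v \<le> p * N v"
  shows "sp h v n t \<le> N v * (1 + (lam - 1) * p) ^ n * lam powr - t"
proof (induction n arbitrary: h v t)
  case 0
  have "1 \<le> lam powr - t" if "t \<le> 0"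
    using lam that by (simp add: ge_one_powr_ge_zero)
  then show ?case
    using N_nonneg[of v] by (simp add: sp_0 mult_le_cancel_left1)
next
  case (Suc n)
  define B where "B = (1 + (lam - 1) * p) ^ n"
  have "0 \<le> B"
    using lam p by (simp add: B_def)
  have "sp h v (Suc n) t \<le> (\<Sum>z\<in>UNIV. 1/2 * (\<Sum>l<L h. \<Sum>k<K z.
      w z k * (N (ch h v z l k) * B * lam powr - (t - (if G h l = z then 1 else 0)))))"
    unfolding sp_Suc B_def by (intro sum_mono mult_left_mono Suc.IH) (auto simp: w_nonneg)
  also have "\<dots> = B * lam powr - t * (N v + (lam - 1) * win h v)"
    using lam by (intro tilted_step) simp
  also have "\<dots> \<le> B * lam powr - t * (N v + (lam - 1) * (p * N v))"
    using \<open>0 \<le> B\<close> lam win_le[where h = h and v = v] by (intro mult_left_mono) auto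
  finally show ?case
    by (simp add: B_def algebra_simps)
qed

lemma deficit_le_tilted:
  assumes lam: "0 < lam" "lam < 1" and q: "q \<le> 1" and win_ge: "\<And>h v. q * N v \<le> win h v"
  shows "N v - sp h v n t \<le> N v * (1 + (lam - 1) * q) ^ n * lam powr - t"
proof (induction n arbitrary: h v t)
  case 0
  have "1 \<le> lam powr - t" if "\<not> t \<le> 0"
    using lam that by (simp add: powr_minus one_le_inverse powr_le1)
  then show ?case
    using N_nonneg[of v] by (simp add: sp_0 mult_le_cancel_left1)
next
  case (Suc n)
  define B where "B = (1 + (lam - 1) * q) ^ n"
  have "lam - 1 \<le> (lam - 1) * q"
    using lam q mult_left_mono_neg[of q 1 "lam - 1"] by simp
  then have "0 \<le> 1 + (lam - 1) * q"
    using lam by linarith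
  then have "0 \<le> B"
    by (simp add: B_def)
  have "N v - sp h v (Suc n) t = (\<Sum>z\<in>UNIV. 1/2 * (\<Sum>l<L h. \<Sum>k<K z.
      w z k * (N (ch h v z l k) - sp (nxt h l) (ch h v z l k) n (t - (if G h l = z then 1 else 0)))))"
    by (simp add: sp_Suc N_conserved UNIV_bool sum_subtractf right_diff_distrib)
  also have "\<dots> \<le> (\<Sum>z\<in>UNIV. 1/2 * (\<Sum>l<L h. \<Sum>k<K z.
      w z k * (N (ch h v z l k) * B * lam powr - (t - (if G h l = z then 1 else 0)))))"
    unfolding B_def by (intro sum_mono mult_left_mono Suc.IH) (auto simp: w_nonneg)
  also have "\<dots> = B * lam powr - t * (N v + (lam - 1) * win h v)"
    using lam by (intro tilted_step) simp
  also have "\<dots> \<le> B * lam powr - t * (N v + (lam - 1) * (q * N v))"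
    using \<open>0 \<le> B\<close> lam win_ge[where h = h and v = v] by (intro mult_left_mono mult_left_mono_neg add_left_mono) auto
  finally show ?case
    by (simp add: B_def algebra_simps)
qed

lemma sp_le_chernoff:
  assumes "1 < lam" and "0 \<le> p" and "\<And>h v. win h v \<le> p * N v"
  shows "sp h v n (r * real n) \<le> N v * chernoff_factor p r lam ^ n"
  using sp_le_tilted[OF assms, of h v n "r * real n"] assms(1)
  by (simp add: chernoff_factor_power[symmetric] mult.assoc)

lemma deficit_le_chernoff:
  assumes "0 < lam" and "lam < 1" and "q \<le> 1" and "\<And>h v. q * N v \<le> win h v"
  shows "N v - sp h v n (r * real n) \<le> N v * chernoff_factor q r lam ^ n"
  using deficit_le_tilted[OF assms, of v h n "r * real n"] assms(1)
  by (simp add: chernoff_factor_power[symmetric] mult.assoc)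

end

section \<open>Achievable rates\<close>

lemma Sup_eq_if_dense_below:
  fixes P :: real
  assumes "\<And>r. r \<in> R \<Longrightarrow> r \<le> P" and "\<And>r. r < P \<Longrightarrow> r \<in> R"
  shows "Sup R = P"
proof (rule cSup_eq)
  show "P \<le> y" if "\<And>r. r \<in> R \<Longrightarrow> r \<le> y" for y
    using that assms(2) by (meson dense_le)
qed (rule assms(1))

lemma achievable_if_failure_decays:
  assumes "0 \<le> \<beta>" and "\<beta> < 1" and "\<And>n. 1 - succ_prob dA dB mA mB \<rho>0 \<rho>1 S [] \<mu>1 n (r * real n) \<le> \<beta> ^ n"
  shows "achievable dA dB mA mB \<rho>0 \<rho>1 \<mu>1 S r"
  unfolding achievable_def
proof (intro allI impI)
  fix \<epsilon> :: real and m :: nat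
  assume "0 < \<epsilon>"
  then obtain N where "\<beta> ^ N < \<epsilon>"
    using real_arch_pow_inv \<open>\<beta> < 1\<close> by blast
  moreover have "\<beta> ^ max m N \<le> \<beta> ^ N"
    using assms(1,2) by (intro power_decreasing) auto
  ultimately show "\<exists>n\<ge>m. 1 - \<epsilon> \<le> succ_prob dA dB mA mB \<rho>0 \<rho>1 S [] \<mu>1 n (r * real n)"
    using assms(3)[of "max m N"] by (intro exI[of _ "max m N"]) auto
qed

lemma achievable_imp_no_success_decay:
  assumes "achievable dA dB mA mB \<rho>0 \<rho>1 \<mu>1 S r" and "\<bar>\<beta>\<bar> < 1"
    and "\<And>n. succ_prob dA dB mA mB \<rho>0 \<rho>1 S [] \<mu>1 n (r * real n) \<le> C * \<beta> ^ n"
  shows False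
proof -
  have "(\<lambda>n. C * \<beta> ^ n) \<longlonglongrightarrow> 0"
    using assms(2) by (intro tendsto_mult_right_zero LIMSEQ_power_zero) simp
  then have "\<forall>\<^sub>F n in sequentially. C * \<beta> ^ n < 1/2"
    by (rule order_tendstoD) simp
  then obtain N where N: "\<And>n. N \<le> n \<Longrightarrow> C * \<beta> ^ n < 1/2"
    unfolding eventually_sequentially by blast
  obtain n where "Suc N \<le> n" and "1 - 1/2 \<le> succ_prob dA dB mA mB \<rho>0 \<rho>1 S [] \<mu>1 n (r * real n)"
    using assms(1) unfolding achievable_def by (meson half_gt_zero zero_less_Suc zero_less_one)
  then show False
    using N[of n] assms(3)[of n] by simp
qed

locale separable_pair =
  fixes dA dB :: nat and \<rho>0 \<rho>1 :: bop and ps0 ps1 :: ensemble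
  assumes rep0: "ensemble_rep dA dB \<rho>0 ps0" and rep1: "ensemble_rep dA dB \<rho>1 ps1"
    and prob0: "prob_ensemble dA dB ps0" and prob1: "prob_ensemble dA dB ps1"
begin

abbreviation ens :: "bool \<Rightarrow> ensemble" where "ens z \<equiv> if z then ps1 else ps0"

abbreviation \<Delta> :: bop where "\<Delta> \<equiv> \<lambda>p q. \<rho>0 p q - \<rho>1 p q"

lemma prob_ens: "prob_ensemble dA dB (ens z)"
  using prob0 prob1 by simp

lemma locc_value_eq:
  "locc_value dA dB \<Delta> a' b' L lab =
     (\<Sum>c\<in>lab ` {..<length L}. \<bar>label_weight dA dB a' b' ps0 L lab c - label_weight dA dB a' b' ps1 L lab c\<bar>)"
  unfolding locc_value_def trprod_diff_right trprod_povm_elem[OF rep0] trprod_povm_elem[OF rep1]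
  by (simp only: of_real_diff[symmetric] norm_of_real)

lemma sum_max_label_weight:
  assumes "locc dA dB a' b' L"
  shows "(\<Sum>c\<in>lab ` {..<length L}. max (label_weight dA dB a' b' ps0 L lab c) (label_weight dA dB a' b' ps1 L lab c))
    = 1 + 1/2 * locc_value dA dB \<Delta> a' b' L lab"
proof -
  let ?W = "\<lambda>z. label_weight dA dB a' b' (ens z) L lab"
  have "(\<Sum>c\<in>lab ` {..<length L}. max (?W False c) (?W True c)) =
      (\<Sum>c\<in>lab ` {..<length L}. ?W False c + ?W True c + \<bar>?W False c - ?W True c\<bar>) / 2"
    unfolding sum_divide_distrib by (intro sum.cong refl) (simp add: max_def)
  also have "\<dots> = 1 + 1/2 * locc_value dA dB \<Delta> a' b' L lab"
    using sum_label_weight[OF assms prob0, of lab] sum_label_weight[OF assms prob1, of lab]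
    by (simp add: locc_value_eq sum.distrib)
  finally show ?thesis
    by simp
qed

lemma locc_value_le_2:
  assumes "locc dA dB a' b' L"
  shows "locc_value dA dB \<Delta> a' b' L lab \<le> 2"
proof -
  have "(\<Sum>c\<in>lab ` {..<length L}. max (label_weight dA dB a' b' ps0 L lab c) (label_weight dA dB a' b' ps1 L lab c))
      \<le> (\<Sum>c\<in>lab ` {..<length L}. label_weight dA dB a' b' ps0 L lab c + label_weight dA dB a' b' ps1 L lab c)"
    using label_weight_nonneg[OF prob0] label_weight_nonneg[OF prob1] by (intro sum_mono) simp
  then show ?thesis
    using sum_label_weight[OF assms prob0, of lab] sum_label_weight[OF assms prob1, of lab]
    by (simp add: sum_max_label_weight[OF assms] sum.distrib)
qed

lemma bdd_above_locc_values: "bdd_above {locc_value dA dB \<Delta> a' b' L lab | a' b' L lab. locc dA dB a' b' L}"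
  using locc_value_le_2 by (auto intro!: bdd_aboveI[of _ 2])

lemma locc_value_le_locc_norm:
  "locc dA dB a' b' L \<Longrightarrow> locc_value dA dB \<Delta> a' b' L lab \<le> locc_norm dA dB \<Delta>"
  unfolding locc_norm_eq_Sup_locc_value by (rule cSup_upper[OF _ bdd_above_locc_values]) blast

lemma P_LOCC_ge_half: "1/2 \<le> P_LOCC dA dB \<rho>0 \<rho>1"
proof -
  have "0 \<le> locc_value dA dB \<Delta> dA dB [(idm, idm)] id"
    by (simp add: locc_value_def sum_nonneg)
  then show ?thesis
    using locc_value_le_locc_norm[OF locc.triv, of id] unfolding P_LOCC_def by linarith
qed

lemma exists_locc_value_gt:
  assumes "x < locc_norm dA dB \<Delta>"
  obtains a' b' L lab where "locc dA dB a' b' L" and "x < locc_value dA dB \<Delta> a' b' L lab"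
proof -
  have "{locc_value dA dB \<Delta> a' b' L lab | a' b' L lab. locc dA dB a' b' L} \<noteq> {}"
    using locc.triv by blast
  then obtain y where "y \<in> {locc_value dA dB \<Delta> a' b' L lab | a' b' L lab. locc dA dB a' b' L}" and "x < y"
    using assms less_cSup_iff[OF _ bdd_above_locc_values] unfolding locc_norm_eq_Sup_locc_value by blast
  then show ?thesis
    using that by blast
qed

lemma sum_leaf_weight_guess:
  "(\<Sum>l<length L. leaf_weight dA dB a' b' (ens (G (lab l))) (L ! l)) =
     (\<Sum>c\<in>lab ` {..<length L}. if G c then label_weight dA dB a' b' ps1 L lab c else label_weight dA dB a' b' ps0 L lab c)"
  unfolding sum_by_label[where lab = lab] label_weight_def by (intro sum.cong refl) auto

lemma guess_success_le_P_LOCC: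
  assumes "locc dA dB a' b' L"
  shows "1/2 * (\<Sum>l<length L. leaf_weight dA dB a' b' (ens (g l)) (L ! l)) \<le> P_LOCC dA dB \<rho>0 \<rho>1"
proof -
  have "(\<Sum>l<length L. leaf_weight dA dB a' b' (ens (g l)) (L ! l)) \<le>
      (\<Sum>c\<in>id ` {..<length L}. max (label_weight dA dB a' b' ps0 L id c) (label_weight dA dB a' b' ps1 L id c))"
    using sum_leaf_weight_guess[where G = g and lab = id] by (simp add: sum_mono)
  also have "\<dots> \<le> 1 + 1/2 * locc_norm dA dB \<Delta>"
    unfolding sum_max_label_weight[OF assms] using locc_value_le_locc_norm[OF assms] by simp
  finally show ?thesis
    unfolding P_LOCC_def by simp
qed

lemma best_guess_success:
  fixes lab :: "nat \<Rightarrow> nat"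
  assumes "locc dA dB a' b' L"
  defines "G \<equiv> \<lambda>c. label_weight dA dB a' b' ps0 L lab c < label_weight dA dB a' b' ps1 L lab c"
  shows "1/2 * (\<Sum>l<length L. leaf_weight dA dB a' b' (ens (G (lab l))) (L ! l)) =
    1/2 + 1/4 * locc_value dA dB \<Delta> a' b' L lab"
proof -
  have "(\<Sum>l<length L. leaf_weight dA dB a' b' (ens (G (lab l))) (L ! l)) =
      (\<Sum>c\<in>lab ` {..<length L}. if G c then label_weight dA dB a' b' ps1 L lab c else label_weight dA dB a' b' ps0 L lab c)"
    by (rule sum_leaf_weight_guess)
  also have "\<dots> = (\<Sum>c\<in>lab ` {..<length L}. max (label_weight dA dB a' b' ps0 L lab c) (label_weight dA dB a' b' ps1 L lab c))"
    unfolding G_def by (intro sum.cong refl) (simp add: max_def)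
  finally show ?thesis
    using sum_max_label_weight[OF assms(1)] by simp
qed

lemma round_success_le_P_LOCC:
  assumes L: "locc (dA * mA) (dB * mB) mA mB L" and mA: "0 < mA" and mB: "0 < mB"
  shows "1/2 * (\<Sum>l<length L. \<Sum>k<length (ens (g l)).
      ens_prob (ens (g l)) k * prod_weight mA mB (branch_memory dA dB mA mB (L ! l) (ens (g l)) v k))
    \<le> P_LOCC dA dB \<rho>0 \<rho>1 * prod_weight mA mB v"
proof -
  define \<omega> where "\<omega> ps l = (\<Sum>k<length ps. ens_prob ps k * prod_weight mA mB (branch_memory dA dB mA mB (L ! l) ps v k))"
    for ps l
  show ?thesis
  proof (cases "prod_weight mA mB v = 0")
    case True
    have "(\<Sum>l<length L. \<omega> (ens (g l)) l) \<le> (\<Sum>l<length L. \<omega> ps0 l + \<omega> ps1 l)"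
      using prob0 prob1 unfolding \<omega>_def prob_ensemble_def
      by (intro sum_mono) (auto intro!: sum_nonneg mult_nonneg_nonneg prod_weight_nonneg)
    also have "\<dots> = 0"
      using sum_branch_weight[OF L prob0 mA mB, of v] sum_branch_weight[OF L prob1 mA mB, of v] True
      by (simp add: \<omega>_def sum.distrib)
    finally show ?thesis
      using True by (simp add: \<omega>_def)
  next
    case False
    then have "0 < prod_weight mA mB v"
      using prod_weight_nonneg[of mA mB v] by simp
    then obtain L' where L': "locc dA dB mA mB L'" "length L' = length L"
      and weight: "\<And>ps l. l < length L \<Longrightarrow> \<omega> ps l = prod_weight mA mB v * leaf_weight dA dB mA mB ps (L' ! l)"
      unfolding \<omega>_def by (rule locc_absorb_product_memory[OF L mA mB]) blast
    have "1/2 * (\<Sum>l<length L. \<omega> (ens (g l)) l) =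
        prod_weight mA mB v * (1/2 * (\<Sum>l<length L'. leaf_weight dA dB mA mB (ens (g l)) (L' ! l)))"
      by (simp add: L'(2) weight sum_distrib_left)
    also have "\<dots> \<le> prod_weight mA mB v * P_LOCC dA dB \<rho>0 \<rho>1"
      by (intro mult_left_mono guess_success_le_P_LOCC L'(1) prod_weight_nonneg)
    finally show ?thesis
      by (simp add: \<omega>_def mult.commute)
  qed
qed

lemma memory_guessing_game:
  assumes "valid_strategy dA dB mA mB S" and mA: "0 < mA" and mB: "0 < mB"
  shows "guessing_game (\<lambda>h v. succ_prob dA dB mA mB \<rho>0 \<rho>1 S h (prod_ketbra (fst v) (snd v)))
    (prod_weight mA mB) (\<lambda>h. length (fst (S h))) (\<lambda>z. length (ens z)) (\<lambda>z. ens_prob (ens z))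
    (\<lambda>h v z l. branch_memory dA dB mA mB (fst (S h) ! l) (ens z) v) (\<lambda>h. snd (S h)) (\<lambda>h l. h @ [l])"
proof
  show "succ_prob dA dB mA mB \<rho>0 \<rho>1 S h (prod_ketbra (fst v) (snd v)) 0 t = (if t \<le> 0 then prod_weight mA mB v else 0)"
    for h v t by (simp add: btrace_prod_ketbra_prod_weight)
  show "succ_prob dA dB mA mB \<rho>0 \<rho>1 S h (prod_ketbra (fst v) (snd v)) (Suc n) t =
    (\<Sum>z\<in>UNIV. 1/2 * (\<Sum>l<length (fst (S h)). \<Sum>k<length (ens z). ens_prob (ens z) k *
       succ_prob dA dB mA mB \<rho>0 \<rho>1 S (h @ [l])
         (prod_ketbra (fst (branch_memory dA dB mA mB (fst (S h) ! l) (ens z) v k))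
                      (snd (branch_memory dA dB mA mB (fst (S h) ! l) (ens z) v k))) n
         (t - (if snd (S h) l = z then 1 else 0))))" for h v n t
    by (simp only: succ_prob_Suc_prod_ketbra[OF rep0 rep1 mA mB] case_prod_beta)
  show "0 \<le> prod_weight mA mB v" for v
    by (rule prod_weight_nonneg)
  show "k < length (ens z) \<Longrightarrow> 0 \<le> ens_prob (ens z) k" for k z
    using prob_ens[of z] unfolding prob_ensemble_def by blast
  show "(\<Sum>l<length (fst (S h)). \<Sum>k<length (ens z).
      ens_prob (ens z) k * prod_weight mA mB (branch_memory dA dB mA mB (fst (S h) ! l) (ens z) v k)) =
    prod_weight mA mB v" for h v z
    using assms(1) unfolding valid_strategy_def by (intro sum_branch_weight prob_ens mA mB) blast
qed

lemma succ_prob_prod_ketbra_le: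
  assumes "valid_strategy dA dB mA mB S" and "0 < mA" and "0 < mB" and "1 < lam"
  shows "succ_prob dA dB mA mB \<rho>0 \<rho>1 S h (prod_ketbra (fst v) (snd v)) n (r * real n) \<le>
    prod_weight mA mB v * chernoff_factor (P_LOCC dA dB \<rho>0 \<rho>1) r lam ^ n"
proof (rule guessing_game.sp_le_chernoff[OF memory_guessing_game[OF assms(1-3)] assms(4)])
  show "0 \<le> P_LOCC dA dB \<rho>0 \<rho>1"
    using P_LOCC_ge_half by linarith
  show "guessing_game.win (prod_weight mA mB) (\<lambda>h. length (fst (S h))) (\<lambda>z. length (ens z)) (\<lambda>z. ens_prob (ens z))
      (\<lambda>h v z l. branch_memory dA dB mA mB (fst (S h) ! l) (ens z) v) (\<lambda>h. snd (S h)) h' v'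
    \<le> P_LOCC dA dB \<rho>0 \<rho>1 * prod_weight mA mB v'" for h' v'
    using assms(1) unfolding valid_strategy_def guessing_game.win_def[OF memory_guessing_game[OF assms(1-3)]]
    by (intro round_success_le_P_LOCC assms(2,3)) blast
qed

lemma succ_prob_le_geometric:
  assumes mA: "0 < mA" and mB: "0 < mB" and "density mA mB \<mu>1"
    and S: "valid_strategy dA dB mA mB S" and "1 < lam"
  obtains C where "\<And>n. succ_prob dA dB mA mB \<rho>0 \<rho>1 S [] \<mu>1 n (r * real n) \<le>
    C * chernoff_factor (P_LOCC dA dB \<rho>0 \<rho>1) r lam ^ n"
proof -
  let ?\<beta> = "chernoff_factor (P_LOCC dA dB \<rho>0 \<rho>1) r lam"
  obtain I :: "(nat \<times> nat \<times> nat \<times> nat \<times> nat \<times> nat) set" and c \<alpha> \<beta> where "finite I" and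
    \<mu>1: "\<And>x y x' y'. x < mA \<Longrightarrow> y < mB \<Longrightarrow> x' < mA \<Longrightarrow> y' < mB \<Longrightarrow>
        \<mu>1 (x, y) (x', y') = (\<Sum>k\<in>I. complex_of_real (c k) * prod_ketbra (\<alpha> k) (\<beta> k) (x, y) (x', y'))"
    using hermitian_prod_ketbra_expansion[of mA mB \<mu>1] \<open>density mA mB \<mu>1\<close> unfolding density_def by blast
  have bound: "c k * succ_prob dA dB mA mB \<rho>0 \<rho>1 S [] (prod_ketbra (\<alpha> k) (\<beta> k)) n (r * real n) \<le>
      \<bar>c k\<bar> * (prod_weight mA mB (\<alpha> k, \<beta> k) * ?\<beta> ^ n)" for k n
  proof -
    have "0 \<le> succ_prob dA dB mA mB \<rho>0 \<rho>1 S [] (prod_ketbra (\<alpha> k) (\<beta> k)) n (r * real n)"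
      using guessing_game.sp_nonneg[OF memory_guessing_game[OF S mA mB], of "[]" "(\<alpha> k, \<beta> k)"] by simp
    moreover have "succ_prob dA dB mA mB \<rho>0 \<rho>1 S [] (prod_ketbra (\<alpha> k) (\<beta> k)) n (r * real n) \<le>
        prod_weight mA mB (\<alpha> k, \<beta> k) * ?\<beta> ^ n"
      using succ_prob_prod_ketbra_le[OF S mA mB \<open>1 < lam\<close>, of "[]" "(\<alpha> k, \<beta> k)"] by simp
    ultimately show ?thesis
      by (metis abs_ge_self abs_ge_zero mult_mono)
  qed
  have "succ_prob dA dB mA mB \<rho>0 \<rho>1 S [] \<mu>1 n (r * real n) \<le>
      (\<Sum>k\<in>I. \<bar>c k\<bar> * prod_weight mA mB (\<alpha> k, \<beta> k)) * ?\<beta> ^ n" for n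
  proof -
    have "succ_prob dA dB mA mB \<rho>0 \<rho>1 S [] \<mu>1 n (r * real n) =
        (\<Sum>k\<in>I. c k * succ_prob dA dB mA mB \<rho>0 \<rho>1 S [] (prod_ketbra (\<alpha> k) (\<beta> k)) n (r * real n))"
      by (rule succ_prob_lincomb[where \<nu> = "\<lambda>k. prod_ketbra (\<alpha> k) (\<beta> k)", OF \<open>finite I\<close> mA mB \<mu>1])
    also have "\<dots> \<le> (\<Sum>k\<in>I. \<bar>c k\<bar> * (prod_weight mA mB (\<alpha> k, \<beta> k) * ?\<beta> ^ n))"
      by (intro sum_mono bound)
    finally show ?thesis
      by (simp add: sum_distrib_right mult.assoc)
  qed
  then show ?thesis
    by (rule that)
qed

lemma achievable_le_P_LOCC:
  assumes "0 < mA" and "0 < mB" and "density mA mB \<mu>1"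
    and "valid_strategy dA dB mA mB S" and "achievable dA dB mA mB \<rho>0 \<rho>1 \<mu>1 S r"
  shows "r \<le> P_LOCC dA dB \<rho>0 \<rho>1"
proof (rule ccontr)
  assume "\<not> r \<le> P_LOCC dA dB \<rho>0 \<rho>1"
  then obtain lam where "1 < lam" and decay: "chernoff_factor (P_LOCC dA dB \<rho>0 \<rho>1) r lam < 1"
    using exists_chernoff_factor_above by (meson not_le)
  moreover have "0 \<le> chernoff_factor (P_LOCC dA dB \<rho>0 \<rho>1) r lam"
    using \<open>1 < lam\<close> P_LOCC_ge_half by (simp add: chernoff_factor_def)
  moreover obtain C where "\<And>n. succ_prob dA dB mA mB \<rho>0 \<rho>1 S [] \<mu>1 n (r * real n) \<le>
      C * chernoff_factor (P_LOCC dA dB \<rho>0 \<rho>1) r lam ^ n"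
    using succ_prob_le_geometric[OF assms(1-4) \<open>1 < lam\<close>] by blast
  ultimately show False
    using achievable_imp_no_success_decay[OF assms(5)] by (metis abs_of_nonneg)
qed

text \<open>Measuring the outputs keeps the memory one-dimensional, so repeating a single LOCC
  measurement is a memory-assisted strategy.\<close>
lemma measured_strategy_achieves:
  assumes L: "locc dA dB a' b' L"
    and r: "r < 1/2 * (\<Sum>l<length L. leaf_weight dA dB a' b' (ens (g l)) (L ! l))"
  defines "S \<equiv> \<lambda>h. (concat (map (measure_leaf a' b') L), \<lambda>m. g (m div (a' * b')))"
  shows "valid_strategy dA dB 1 1 S" and "achievable dA dB 1 1 \<rho>0 \<rho>1 (prod_ketbra (\<lambda>_. 1) (\<lambda>_. 1)) S r"
proof -
  show valid: "valid_strategy dA dB 1 1 S"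
    using locc_measure_outputs[OF L] by (simp add: valid_strategy_def S_def)
  let ?\<sigma> = "1/2 * (\<Sum>l<length L. leaf_weight dA dB a' b' (ens (g l)) (L ! l))"
  have "?\<sigma> \<le> 1/2 * (\<Sum>l<length L. leaf_weight dA dB a' b' ps0 (L ! l) + leaf_weight dA dB a' b' ps1 (L ! l))"
    using leaf_weight_nonneg[OF prob0] leaf_weight_nonneg[OF prob1] by (intro mult_left_mono sum_mono) auto
  then have "?\<sigma> \<le> 1"
    using sum_leaf_weight[OF L prob0] sum_leaf_weight[OF L prob1] by (simp add: sum.distrib)
  note game = memory_guessing_game[OF valid zero_less_one zero_less_one]
  let ?win = "guessing_game.win (prod_weight 1 1) (\<lambda>h. length (fst (S h))) (\<lambda>z. length (ens z))
      (\<lambda>z. ens_prob (ens z)) (\<lambda>h v z l. branch_memory dA dB 1 1 (fst (S h) ! l) (ens z) v) (\<lambda>h. snd (S h))"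
  have "?win h v = prod_weight 1 1 v * (1/2 * (\<Sum>m<length (concat (map (measure_leaf a' b') L)).
      leaf_weight dA dB 1 1 (ens (g (m div (a' * b')))) (concat (map (measure_leaf a' b') L) ! m)))" for h v
    unfolding guessing_game.win_def[OF game]
    unfolding S_def fst_conv snd_conv prod_weight_branch_memory_1 leaf_weight_def
    by (simp add: sum_distrib_left mult_ac)
  then have win: "?\<sigma> * prod_weight 1 1 v \<le> ?win h v" for h v
    unfolding sum_leaf_weight_measure_outputs[where ps = "\<lambda>l. ens (g l)"] by simp
  obtain lam where lam: "0 < lam" "lam < 1" and decay: "chernoff_factor ?\<sigma> r lam < 1"
    using exists_chernoff_factor_below[OF r] by blast
  have "lam - 1 \<le> (lam - 1) * ?\<sigma>"
    using lam \<open>?\<sigma> \<le> 1\<close> mult_left_mono_neg[of ?\<sigma> 1 "lam - 1"] by simp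
  then have "0 \<le> chernoff_factor ?\<sigma> r lam"
    using lam by (simp add: chernoff_factor_def)
  moreover have "1 - succ_prob dA dB 1 1 \<rho>0 \<rho>1 S [] (prod_ketbra (\<lambda>_. 1) (\<lambda>_. 1)) n (r * real n)
      \<le> chernoff_factor ?\<sigma> r lam ^ n" for n
    using guessing_game.deficit_le_chernoff[OF game lam \<open>?\<sigma> \<le> 1\<close> win, of "((\<lambda>_. 1), (\<lambda>_. 1))" "[]" n r]
    by (simp add: prod_weight_def sqnorm_def)
  ultimately show "achievable dA dB 1 1 \<rho>0 \<rho>1 (prod_ketbra (\<lambda>_. 1) (\<lambda>_. 1)) S r"
    using decay by (intro achievable_if_failure_decays)
qed

lemma achievable_below_P_LOCC:
  assumes "r < P_LOCC dA dB \<rho>0 \<rho>1"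
  shows "\<exists>mA mB \<mu>1 S. 0 < mA \<and> 0 < mB \<and> density mA mB \<mu>1 \<and> valid_strategy dA dB mA mB S \<and>
           achievable dA dB mA mB \<rho>0 \<rho>1 \<mu>1 S r"
proof -
  have "4 * (r - 1/2) < locc_norm dA dB \<Delta>"
    using assms by (simp add: P_LOCC_def)
  then obtain a' b' L lab where L: "locc dA dB a' b' L" and "4 * (r - 1/2) < locc_value dA dB \<Delta> a' b' L lab"
    by (rule exists_locc_value_gt)
  then have "r < 1/2 * (\<Sum>l<length L. leaf_weight dA dB a' b' (ens
      (label_weight dA dB a' b' ps0 L lab (lab l) < label_weight dA dB a' b' ps1 L lab (lab l))) (L ! l))"
    using best_guess_success[OF L, of lab] by simp
  note achieves = measured_strategy_achieves[OF L this]
  show ?thesis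
    using achieves density_trivial_memory zero_less_one by blast
qed

end

theorem proposition2:
  fixes dA dB :: nat and \<rho>0 \<rho>1 :: bop
  assumes "sep dA dB \<rho>0" and "sep dA dB \<rho>1"
  shows "R_mem dA dB \<rho>0 \<rho>1 = P_LOCC dA dB \<rho>0 \<rho>1"
proof -
  obtain ps0 where "ensemble_rep dA dB \<rho>0 ps0" "prob_ensemble dA dB ps0"
    using sep_obtain_ensemble[OF assms(1)] by blast
  moreover obtain ps1 where "ensemble_rep dA dB \<rho>1 ps1" "prob_ensemble dA dB ps1"
    using sep_obtain_ensemble[OF assms(2)] by blast
  ultimately interpret separable_pair dA dB \<rho>0 \<rho>1 ps0 ps1
    by unfold_locales
  show ?thesis
    unfolding R_mem_def
  proof (rule Sup_eq_if_dense_below)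
    show "r \<le> P_LOCC dA dB \<rho>0 \<rho>1" if "r \<in> {r. \<exists>mA mB \<mu>1 S. 0 < mA \<and> 0 < mB \<and> density mA mB \<mu>1 \<and>
        valid_strategy dA dB mA mB S \<and> achievable dA dB mA mB \<rho>0 \<rho>1 \<mu>1 S r}" for r
      using that by (auto intro: achievable_le_P_LOCC)
  qed (use achievable_below_P_LOCC in \<open>simp only: mem_Collect_eq\<close>)
qed

end
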